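(* Let $n\ge 2$, let $2\le d_1\le\cdots\le d_n$, let $\delta\ge 2$, $s\in\{1,\dots,n\}$ with $r:=d_s-\delta+1\ge 1$, and let $d=\sum_{i=1}^k(d_i-1)+\ell$ with $0\le k<n$ and $0<\ell\le d_{k+1}-1$ (empty sums are $0$ and empty products are $1$). Write $\kappa=\dim_{\mathbb F_q}\mathcal D^{(\delta,s)}_{\mathcal X}(d)$. Then $$(d_{k+1}-\ell)\prod_{i=k+2}^n d_i=W^{(1)}(\mathcal C_{\mathcal X}(d))\le W^{(1)}(\mathcal D^{(\delta,s)}_{\mathcal X}(d))\le m-\kappa-\left(\left\lceil\frac{\kappa}{r}\right\rceil-1\right)(\delta-1)+1 .$$ Moreover, if either (i) $k+2\le n$ and $d_{k+2}\le d_s$, or (ii) $d_s\le d_{k+1}$ and $0\le d_s-(d_{k+1}-\ell)<r$, then $W^{(1)}(\mathcal D^{(\delta,s)}_{\mathcal X}(d))=W^{(1)}(\mathcal C_{\mathcal X}(d))=(d_{k+1}-\ell)\prod_{i=k+2}^n d_i$.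
   Context: Let $\mathbb F_q$ be a finite field, $K_1,\dots,K_n\subseteq\mathbb F_q$ with $d_i=|K_i|$, and $\mathcal X=K_1\times\cdots\times K_n=\{\boldsymbol\alpha_1,\dots,\boldsymbol\alpha_m\}$ (a fixed enumeration), $m=\prod_{i=1}^n d_i$. Let $\Psi:\mathbb F_q[X_1,\dots,X_n]\to\mathbb F_q^m$, $f\mapsto(f(\boldsymbol\alpha_1),\dots,f(\boldsymbol\alpha_m))$. For $d\ge 0$, $\mathbb F_q[X_1,\dots,X_n]_{\le d}$ is the space of polynomials of degree at most $d$ together with $0$. The affine cartesian code is $\mathcal C_{\mathcal X}(d)=\Psi(\mathbb F_q[X_1,\dots,X_n]_{\le d})$. For integers $\delta\ge 2$ and $s\in\{1,\dots,n\}$, $\mathcal P^{(\delta,s)}_d$ is the set of $f\in\mathbb F_q[X_1,\dots,X_n]_{\le d}$ with $\deg_{X_s}f<d_s-\delta+1$, together with $0$; the $(\delta,s)$-quasi affine cartesian code is $\mathcal D^{(\delta,s)}_{\mathcal X}(d)=\Psi(\mathcal P^{(\delta,s)}_d)$. $W^{(1)}(C)$ denotes the minimum Hamming distance (minimum weight of a nonzero codeword) of a linear code $C$; $\lceil x\rceil$ is the least integer $\ge x$. *)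

theory Defs
  imports Complex_Main "HOL-Library.FuncSet" "HOL-Library.Function_Algebras"
begin

text \<open>Multivariate polynomials in the variables X_1,...,X_n over a field, represented
by their coefficient function on exponent vectors e :: nat => nat (e i = exponent of X_i).\<close>

definition is_mpoly :: "nat \<Rightarrow> ((nat \<Rightarrow> nat) \<Rightarrow> 'a::zero) \<Rightarrow> bool" where
  "is_mpoly n p \<longleftrightarrow> finite {e. p e \<noteq> 0} \<and>
     (\<forall>e. p e \<noteq> 0 \<longrightarrow> (\<forall>i. i \<notin> {1..n} \<longrightarrow> e i = 0))"

definition mono_deg :: "nat \<Rightarrow> (nat \<Rightarrow> nat) \<Rightarrow> nat" where
  "mono_deg n e = (\<Sum>i\<in>{1..n}. e i)"

definition mpoly_eval :: "nat \<Rightarrow> ((nat \<Rightarrow> nat) \<Rightarrow> 'a::comm_ring_1) \<Rightarrow> (nat \<Rightarrow> 'a) \<Rightarrow> 'a" where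
  "mpoly_eval n p x = (\<Sum>e\<in>{e. p e \<noteq> 0}. p e * (\<Prod>i\<in>{1..n}. x i ^ e i))"

definition polys_le :: "nat \<Rightarrow> nat \<Rightarrow> ((nat \<Rightarrow> nat) \<Rightarrow> 'a::zero) set" where
  "polys_le n d = {p. is_mpoly n p \<and> (\<forall>e. p e \<noteq> 0 \<longrightarrow> mono_deg n e \<le> d)}"

text \<open>P^{(delta,s)}_d: degree at most d and deg_{X_s} < d_s - delta + 1, with d_s = |K_s|.\<close>
definition quasi_polys :: "nat \<Rightarrow> (nat \<Rightarrow> 'a set) \<Rightarrow> nat \<Rightarrow> nat \<Rightarrow> nat \<Rightarrow> ((nat \<Rightarrow> nat) \<Rightarrow> 'a::zero) set" where
  "quasi_polys n K \<delta> s d = {p \<in> polys_le n d. \<forall>e. p e \<noteq> 0 \<longrightarrow> int (e s) < int (card (K s)) - int \<delta> + 1}"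

definition cart_points :: "nat \<Rightarrow> (nat \<Rightarrow> 'a set) \<Rightarrow> (nat \<Rightarrow> 'a) set" where
  "cart_points n K = PiE {1..n} K"

text \<open>Evaluation map Psi; a codeword is the vector of values indexed by the points of X
(set to 0 outside X).\<close>
definition Psi :: "nat \<Rightarrow> (nat \<Rightarrow> 'a set) \<Rightarrow> ((nat \<Rightarrow> nat) \<Rightarrow> 'a::comm_ring_1) \<Rightarrow> ((nat \<Rightarrow> 'a) \<Rightarrow> 'a)" where
  "Psi n K p = (\<lambda>x. if x \<in> cart_points n K then mpoly_eval n p x else 0)"

definition affine_cart_code :: "nat \<Rightarrow> (nat \<Rightarrow> 'a::comm_ring_1 set) \<Rightarrow> nat \<Rightarrow> ((nat \<Rightarrow> 'a) \<Rightarrow> 'a) set" where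
  "affine_cart_code n K d = Psi n K ` polys_le n d"

definition quasi_cart_code :: "nat \<Rightarrow> (nat \<Rightarrow> 'a::comm_ring_1 set) \<Rightarrow> nat \<Rightarrow> nat \<Rightarrow> nat \<Rightarrow> ((nat \<Rightarrow> 'a) \<Rightarrow> 'a) set" where
  "quasi_cart_code n K \<delta> s d = Psi n K ` quasi_polys n K \<delta> s d"

definition hweight :: "'b set \<Rightarrow> ('b \<Rightarrow> 'a::zero) \<Rightarrow> nat" where
  "hweight X c = card {x\<in>X. c x \<noteq> 0}"

definition min_dist :: "'b set \<Rightarrow> ('b \<Rightarrow> 'a::zero) set \<Rightarrow> nat" where
  "min_dist X C = Min {hweight X c | c. c \<in> C \<and> (\<exists>x\<in>X. c x \<noteq> 0)}"

definition code_dim :: "('b \<Rightarrow> 'a::field) set \<Rightarrow> nat" where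
  "code_dim C = vector_space.dim (\<lambda>(a::'a) v x. a * v x) C"

end

(*
  Minimum distance: reducing modulo the polynomials vanishing on the K_i, a nonzero polynomial of
  degree at most d is nonzero at no fewer grid points than the greedy count cart_min_weight; this
  is the footprint bound, proved by splitting off one variable at a time, and products of linear
  factors attain it. As D is a subcode of C, its minimum distance can only be larger.

  Singleton-type bound: the grid is a disjoint union of lines parallel to the s-th axis, and a
  codeword of D vanishing at r points of such a line vanishes on all of it. Making a codeword vanish
  on t = ceil(kappa/r) - 1 whole lines and on kappa - 1 - t r further points imposes only kappa - 1
  linear conditions, so some nonzero codeword has weight at most m - kappa + 1 - t (delta - 1).

  Equality cases: a minimum weight product codeword of C can be chosen in D, either avoiding X_s
  altogether (exchanging two coordinates with the same number of points) or using fewer than r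
  roots in K_s.
*)

theory Submission
  imports Defs "HOL-Computational_Algebra.Polynomial" "HOL-Library.Disjoint_Sets"
begin

section \<open>The minimum weight function\<close>

text \<open>For sorted side lengths \<open>L\<close> of a grid and a degree \<open>e\<close>, the minimum weight of the affine
  cartesian code: the degree is spent greedily on the shortest sides.\<close>

fun cart_min_weight :: "nat list \<Rightarrow> nat \<Rightarrow> nat" where
  "cart_min_weight [] e = 1"
| "cart_min_weight (a # L) e =
     (if a - 1 \<le> e then cart_min_weight L (e - (a - 1)) else (a - e) * prod_list L)"

lemma diff_mult_le_mult_diff:
  fixes v w c :: nat
  assumes "v \<le> c"
  shows "(v - w) * c \<le> v * (c - w)"
proof -
  have "v * w \<le> w * c"
    using assms by (simp add: mult.commute)
  then have "v * c - w * c \<le> v * c - v * w"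
    by (rule diff_le_mono2)
  then show ?thesis
    by (simp add: diff_mult_distrib diff_mult_distrib2)
qed

lemma cart_min_weight_0: "\<forall>b\<in>set L. 1 \<le> b \<Longrightarrow> cart_min_weight L 0 = prod_list L"
  by (induction L) auto

lemma prod_list_le_cart_min_weight:
  assumes "\<forall>c\<in>set L. v \<le> c" "w < v"
  shows "(v - w) * prod_list L \<le> v * cart_min_weight L w"
proof (cases L)
  case Nil
  then show ?thesis
    by simp
next
  case (Cons c L')
  have c: "v \<le> c" "\<forall>b\<in>set L'. 1 \<le> b"
    using assms Cons by auto
  show ?thesis
  proof (cases "c - 1 \<le> w")
    case True
    then have "v = c" "w = c - 1"
      using c(1) assms(2) by auto
    then show ?thesis
      using Cons c cart_min_weight_0 by simp
  next
    case False
    have "(v - w) * c * prod_list L' \<le> v * (c - w) * prod_list L'"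
      using diff_mult_le_mult_diff[OF c(1)] by (rule mult_right_mono) simp
    then show ?thesis
      using Cons False by (simp add: mult.assoc)
  qed
qed

lemma cart_min_weight_le_mult_shift:
  assumes "\<forall>b\<in>set L. t + 1 \<le> b"
  shows "cart_min_weight L x \<le> (t + 1) * cart_min_weight L (x + t)"
  using assms
proof (induction L arbitrary: x)
  case Nil
  then show ?case by simp
next
  case (Cons b L)
  have b: "t + 1 \<le> b" and L: "\<forall>c\<in>set L. t + 1 \<le> c"
    using Cons.prems by auto
  consider (full) "b - 1 \<le> x" | (partial) "x < b - 1" "b - 1 \<le> x + t" | (none) "x + t < b - 1"
    by linarith
  then show ?case
  proof cases
    case full
    then show ?thesis
      using Cons.IH[OF L, of "x - (b - 1)"] by (simp add: add.commute add_diff_assoc2)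
  next
    case partial
    define w where "w = x + t - (b - 1)"
    have w: "w < t + 1" "b - x = t + 1 - w"
      using partial b by (auto simp: w_def)
    have "cart_min_weight (b # L) x = (t + 1 - w) * prod_list L"
      and "cart_min_weight (b # L) (x + t) = cart_min_weight L w"
      using partial w(2) by (simp_all add: w_def)
    then show ?thesis
      using prod_list_le_cart_min_weight[OF L w(1)] by simp
  next
    case none
    define y where "y = b - (x + t)"
    have "b - x = y + t" "1 \<le> y"
      using none by (auto simp: y_def)
    moreover have "t \<le> t * y"
      using \<open>1 \<le> y\<close> by simp
    ultimately have "b - x \<le> (t + 1) * (b - (x + t))"
      unfolding y_def[symmetric] by simp
    then have "(b - x) * prod_list L \<le> (t + 1) * (b - (x + t)) * prod_list L"
      by (rule mult_right_mono) simp
    moreover have "cart_min_weight (b # L) x = (b - x) * prod_list L"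
      and "cart_min_weight (b # L) (x + t) = (b - (x + t)) * prod_list L"
      using none by simp_all
    ultimately show ?thesis
      by (simp only: mult.assoc)
  qed
qed

lemma cart_min_weight_Cons_le:
  assumes "1 \<le> a" "\<forall>b\<in>set L. a \<le> b" "j \<le> e" "j \<le> a - 1"
  shows "cart_min_weight (a # L) e \<le> (a - j) * cart_min_weight L (e - j)"
proof (cases "a - 1 \<le> e")
  case True
  define t where "t = a - 1 - j"
  have t: "t + 1 = a - j" "e - (a - 1) + t = e - j"
    using assms True by (auto simp: t_def)
  have "cart_min_weight (a # L) e = cart_min_weight L (e - (a - 1))"
    using True by simp
  also have "\<dots> \<le> (t + 1) * cart_min_weight L (e - (a - 1) + t)"
    by (rule cart_min_weight_le_mult_shift) (use assms in \<open>auto simp: t_def\<close>)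
  finally show ?thesis
    unfolding t .
next
  case False
  have "(a - j - (e - j)) * prod_list L \<le> (a - j) * cart_min_weight L (e - j)"
    using assms False by (intro prod_list_le_cart_min_weight) auto
  then show ?thesis
    using assms False by simp
qed

lemma cart_min_weight_eq:
  assumes "\<forall>b\<in>set L. 1 \<le> b" "k < length L" "0 < l" "l \<le> L ! k - 1"
  shows "cart_min_weight L (sum_list (map (\<lambda>b. b - 1) (take k L)) + l)
           = (L ! k - l) * prod_list (drop (Suc k) L)"
  using assms
proof (induction k arbitrary: L)
  case 0
  then obtain a L' where "L = a # L'"
    by (cases L) auto
  then show ?case
    using 0 cart_min_weight_0[of L'] by auto
next
  case (Suc k)
  then obtain a L' where "L = a # L'"
    by (cases L) auto
  then show ?case
    using Suc by auto
qed

lemma cart_min_weight_upt: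
  fixes f :: "nat \<Rightarrow> nat"
  assumes "\<forall>i\<in>{1..n}. 1 \<le> f i" "k < n" "0 < l" "l \<le> f (k + 1) - 1"
  shows "cart_min_weight (map f [1..<Suc n]) ((\<Sum>i\<in>{1..k}. f i - 1) + l)
           = (f (k + 1) - l) * (\<Prod>i\<in>{k+2..n}. f i)"
proof -
  define L where "L = map f [1..<Suc n]"
  have Lk: "L ! k = f (k + 1)"
    using assms(2) by (simp add: L_def nth_map_upt del: upt_Suc)
  have "take k L = map f [1..<Suc k]"
    using assms(2) by (simp add: L_def take_map take_upt)
  then have sum: "sum_list (map (\<lambda>b. b - 1) (take k L)) = (\<Sum>i\<in>{1..k}. f i - 1)"
    by (simp add: sum_set_upt_conv_sum_list_nat[symmetric] atLeastLessThanSuc_atLeastAtMost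
        del: upt_Suc)
  have "drop (Suc k) L = map f [k+2..<Suc n]"
    by (simp add: L_def drop_map)
  then have prod: "prod_list (drop (Suc k) L) = (\<Prod>i\<in>{k+2..n}. f i)"
    using prod.distinct_set_conv_list[of "[k+2..<Suc n]" f]
    by (simp add: atLeastLessThanSuc_atLeastAtMost del: upt_Suc)
  have "cart_min_weight L (sum_list (map (\<lambda>b. b - 1) (take k L)) + l)
      = (L ! k - l) * prod_list (drop (Suc k) L)"
    by (rule cart_min_weight_eq) (use assms Lk in \<open>auto simp: L_def\<close>)
  then have "cart_min_weight L ((\<Sum>i\<in>{1..k}. f i - 1) + l)
      = (f (k + 1) - l) * (\<Prod>i\<in>{k+2..n}. f i)"
    unfolding sum prod Lk .
  then show ?thesis
    by (simp only: L_def)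
qed

section \<open>Polynomials in a finite set of variables\<close>

text \<open>As \<open>mpoly_eval\<close>, but with the variables indexed by an arbitrary set \<open>I\<close>, so that
  variables can be split off one at a time.\<close>

definition monom_vars :: "nat set \<Rightarrow> (nat \<Rightarrow> nat) \<Rightarrow> (nat \<Rightarrow> 'a::comm_ring_1) \<Rightarrow> 'a" where
  "monom_vars I e x = (\<Prod>i\<in>I. x i ^ e i)"

definition eval_vars :: "nat set \<Rightarrow> ((nat \<Rightarrow> nat) \<Rightarrow> 'a::comm_ring_1) \<Rightarrow> (nat \<Rightarrow> 'a) \<Rightarrow> 'a" where
  "eval_vars I p x = (\<Sum>e\<in>{e. p e \<noteq> 0}. p e * monom_vars I e x)"

definition finite_supp :: "((nat \<Rightarrow> nat) \<Rightarrow> 'a::zero) \<Rightarrow> bool" where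
  "finite_supp p \<longleftrightarrow> finite {e. p e \<noteq> 0}"

definition total_deg_le :: "nat set \<Rightarrow> ((nat \<Rightarrow> nat) \<Rightarrow> 'a::zero) \<Rightarrow> nat \<Rightarrow> bool" where
  "total_deg_le I p d \<longleftrightarrow> (\<forall>e. p e \<noteq> 0 \<longrightarrow> (\<Sum>i\<in>I. e i) \<le> d)"

definition grid_reduced :: "nat set \<Rightarrow> (nat \<Rightarrow> 'b set) \<Rightarrow> ((nat \<Rightarrow> nat) \<Rightarrow> 'a::zero) \<Rightarrow> bool" where
  "grid_reduced I K p \<longleftrightarrow> (\<forall>e. p e \<noteq> 0 \<longrightarrow> (\<forall>i\<in>I. e i < card (K i)))"

lemma mpoly_eval_eq_eval_vars: "mpoly_eval n p x = eval_vars {1..n} p x"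
  unfolding mpoly_eval_def eval_vars_def monom_vars_def ..

lemma eval_vars_superset:
  assumes "finite S" "{e. p e \<noteq> 0} \<subseteq> S"
  shows "eval_vars I p x = (\<Sum>e\<in>S. p e * monom_vars I e x)"
  unfolding eval_vars_def using assms by (intro sum.mono_neutral_left) auto

lemma monom_vars_remove:
  assumes "finite I" "i \<in> I"
  shows "monom_vars I e x = x i ^ e i * monom_vars (I - {i}) e x"
  unfolding monom_vars_def using assms by (simp add: prod.remove)

lemma support_lincomb:
  assumes "(\<Sum>k\<in>A. c k * q k e) \<noteq> (0::'a::comm_ring_1)"
  shows "\<exists>k\<in>A. q k e \<noteq> 0"
proof (rule ccontr)
  assume "\<not> ?thesis"
  then have "(\<Sum>k\<in>A. c k * q k e) = 0"
    by (simp add: sum.neutral)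
  with assms show False ..
qed

lemma
  fixes q :: "'k \<Rightarrow> (nat \<Rightarrow> nat) \<Rightarrow> 'a::comm_ring_1"
  assumes "finite A" "\<And>k. k \<in> A \<Longrightarrow> finite_supp (q k)"
  shows finite_supp_lincomb: "finite_supp (\<lambda>e. \<Sum>k\<in>A. c k * q k e)"
    and eval_vars_lincomb:
      "eval_vars I (\<lambda>e. \<Sum>k\<in>A. c k * q k e) x = (\<Sum>k\<in>A. c k * eval_vars I (q k) x)"
proof -
  define S where "S = (\<Union>k\<in>A. {e. q k e \<noteq> 0})"
  have S: "finite S"
    using assms unfolding S_def finite_supp_def by auto
  have supp: "{e. (\<Sum>k\<in>A. c k * q k e) \<noteq> 0} \<subseteq> S"
    unfolding S_def by (auto dest: support_lincomb)
  then show "finite_supp (\<lambda>e. \<Sum>k\<in>A. c k * q k e)"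
    unfolding finite_supp_def using S finite_subset by blast
  have "eval_vars I (\<lambda>e. \<Sum>k\<in>A. c k * q k e) x = (\<Sum>e\<in>S. \<Sum>k\<in>A. c k * (q k e * monom_vars I e x))"
    by (simp add: eval_vars_superset[OF S supp] sum_distrib_right mult.assoc)
  also have "\<dots> = (\<Sum>k\<in>A. c k * (\<Sum>e\<in>S. q k e * monom_vars I e x))"
    by (subst sum.swap) (simp add: sum_distrib_left)
  also have "\<dots> = (\<Sum>k\<in>A. c k * eval_vars I (q k) x)"
  proof (rule sum.cong[OF refl])
    fix k
    assume "k \<in> A"
    then have "{e. q k e \<noteq> 0} \<subseteq> S"
      unfolding S_def by auto
    then show "c k * (\<Sum>e\<in>S. q k e * monom_vars I e x) = c k * eval_vars I (q k) x"
      by (simp add: eval_vars_superset[OF S])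
  qed
  finally show "eval_vars I (\<lambda>e. \<Sum>k\<in>A. c k * q k e) x = (\<Sum>k\<in>A. c k * eval_vars I (q k) x)" .
qed

lemma eval_vars_add:
  assumes "finite_supp p" "finite_supp q"
  shows "eval_vars I (\<lambda>e. p e + q e) x = eval_vars I p x + eval_vars I q x"
proof -
  define S where "S = {e. p e \<noteq> 0} \<union> {e. q e \<noteq> 0}"
  have S: "finite S"
    using assms unfolding S_def finite_supp_def by auto
  have "eval_vars I (\<lambda>e. p e + q e) x = (\<Sum>e\<in>S. p e * monom_vars I e x) + (\<Sum>e\<in>S. q e * monom_vars I e x)"
    by (subst eval_vars_superset[OF S]) (auto simp: S_def algebra_simps sum.distrib)
  also have "\<dots> = eval_vars I p x + eval_vars I q x"
    by (simp add: eval_vars_superset[OF S] S_def)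
  finally show ?thesis .
qed

lemma eval_vars_scale:
  assumes "finite_supp p"
  shows "eval_vars I (\<lambda>e. a * p e) x = a * eval_vars I p x"
proof -
  have S: "finite {e. p e \<noteq> 0}"
    using assms unfolding finite_supp_def .
  show ?thesis
    by (subst eval_vars_superset[OF S]) (auto simp: eval_vars_def sum_distrib_left mult.assoc)
qed

section \<open>Reduction modulo the grid\<close>

definition vanishing_poly :: "'a::comm_ring_1 set \<Rightarrow> 'a poly" where
  "vanishing_poly A = (\<Prod>c\<in>A. [:-c, 1:])"

lemma degree_vanishing_poly: "finite A \<Longrightarrow> degree (vanishing_poly (A :: 'a::field set)) = card A"
  unfolding vanishing_poly_def by (subst degree_prod_eq_sum_degree) auto

lemma lead_coeff_vanishing_poly: "lead_coeff (vanishing_poly (A :: 'a::field set)) = 1"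
  unfolding vanishing_poly_def lead_coeff_prod by simp

lemma poly_vanishing_poly_eq_0_iff:
  "finite A \<Longrightarrow> poly (vanishing_poly (A :: 'a::field set)) t = 0 \<longleftrightarrow> t \<in> A"
  unfolding vanishing_poly_def poly_prod by (auto simp: prod_zero_iff)

lemma power_card_eq_lower_powers:
  fixes A :: "'a::field set"
  assumes A: "finite A" "A \<noteq> {}"
  obtains c where "\<forall>t\<in>A. t ^ card A = (\<Sum>k<card A. c k * t ^ k)"
proof -
  define a where "a = card A"
  have a: "1 \<le> a"
    using A unfolding a_def by (simp add: Suc_le_eq card_gt_0_iff)
  define R where "R = monom 1 a - vanishing_poly A"
  have "degree (vanishing_poly A) = a" "coeff (vanishing_poly A) a = 1"
    using degree_vanishing_poly[OF A(1)] lead_coeff_vanishing_poly[of A] by (simp_all add: a_def)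
  then have "\<forall>i>a - 1. coeff R i = 0"
    using a by (auto simp: R_def coeff_monom coeff_eq_0 le_antisym)
  then have degR: "degree R \<le> a - 1"
    by (rule degree_le)
  have "t ^ a = (\<Sum>k<a. coeff R k * t ^ k)" if "t \<in> A" for t
  proof -
    have "t ^ a = poly R t"
      using that A(1) by (simp add: R_def poly_monom poly_vanishing_poly_eq_0_iff)
    also have "\<dots> = (\<Sum>k<a. coeff R k * t ^ k)"
      unfolding poly_altdef using degR a
      by (intro sum.mono_neutral_left) (auto simp: coeff_eq_0)
    finally show ?thesis .
  qed
  then show ?thesis
    using that unfolding a_def by blast
qed

definition reduced_rep :: "nat set \<Rightarrow> (nat \<Rightarrow> 'a set) \<Rightarrow> nat \<Rightarrow> ((nat \<Rightarrow> 'a::comm_ring_1) \<Rightarrow> 'a) \<Rightarrow> bool" where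
  "reduced_rep I K d f \<longleftrightarrow> (\<exists>q. finite_supp q \<and> total_deg_le I q d \<and> grid_reduced I K q
                                 \<and> (\<forall>x\<in>PiE I K. eval_vars I q x = f x))"

lemma reduced_rep_mono:
  assumes "reduced_rep I K d f" "d \<le> d'"
  shows "reduced_rep I K d' f"
  using assms unfolding reduced_rep_def total_deg_le_def by (blast intro: order_trans)

lemma reduced_rep_cong:
  assumes "reduced_rep I K d f" "\<And>x. x \<in> PiE I K \<Longrightarrow> f x = g x"
  shows "reduced_rep I K d g"
  using assms unfolding reduced_rep_def by fastforce

lemma reduced_rep_lincomb:
  assumes "finite A" "\<And>k. k \<in> A \<Longrightarrow> reduced_rep I K d (g k)"
  shows "reduced_rep I K d (\<lambda>x. \<Sum>k\<in>A. c k * g k x)"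
proof -
  have ex: "\<forall>k\<in>A. \<exists>q. finite_supp q \<and> total_deg_le I q d \<and> grid_reduced I K q
      \<and> (\<forall>x\<in>PiE I K. eval_vars I q x = g k x)"
    using assms(2) unfolding reduced_rep_def by blast
  obtain Q where Q: "\<forall>k\<in>A. finite_supp (Q k) \<and> total_deg_le I (Q k) d
      \<and> grid_reduced I K (Q k) \<and> (\<forall>x\<in>PiE I K. eval_vars I (Q k) x = g k x)"
    using bchoice[OF ex] by blast
  define q where "q = (\<lambda>e. \<Sum>k\<in>A. c k * Q k e)"
  have supp: "\<exists>k\<in>A. Q k e \<noteq> 0" if "q e \<noteq> 0" for e
    using that unfolding q_def by (rule support_lincomb)
  have "finite_supp q"
    unfolding q_def using assms(1) Q by (intro finite_supp_lincomb) auto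
  moreover have "total_deg_le I q d" "grid_reduced I K q"
    using Q supp unfolding total_deg_le_def grid_reduced_def by blast+
  moreover have "eval_vars I q x = (\<Sum>k\<in>A. c k * g k x)" if "x \<in> PiE I K" for x
    unfolding q_def using assms(1) Q that by (subst eval_vars_lincomb) auto
  ultimately show ?thesis
    unfolding reduced_rep_def by blast
qed

lemma monom_vars_reduce_step:
  fixes K :: "nat \<Rightarrow> 'a::field set"
  assumes I: "finite I" "i \<in> I" and K: "finite (K i)" "K i \<noteq> {}" and e: "card (K i) \<le> e i"
  obtains c where "\<forall>x\<in>PiE I K. monom_vars I e x
      = (\<Sum>k<card (K i). c k * monom_vars I (e(i := e i - card (K i) + k)) x)"
proof -
  define a where "a = card (K i)"
  obtain c where c: "\<forall>t\<in>K i. t ^ a = (\<Sum>k<a. c k * t ^ k)"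
    using power_card_eq_lower_powers[OF K] unfolding a_def by blast
  have "monom_vars I e x = (\<Sum>k<a. c k * monom_vars I (e(i := e i - a + k)) x)"
    if x: "x \<in> PiE I K" for x
  proof -
    define rest where "rest = monom_vars (I - {i}) e x"
    have rest: "monom_vars (I - {i}) (e(i := j)) x = rest" for j
      unfolding rest_def monom_vars_def by (intro prod.cong) auto
    have "monom_vars I e x = x i ^ (e i - a) * x i ^ a * rest"
      using e by (simp add: monom_vars_remove[OF I] rest_def a_def power_add[symmetric])
    also have "\<dots> = x i ^ (e i - a) * (\<Sum>k<a. c k * x i ^ k) * rest"
      using c x I(2) by auto
    also have "\<dots> = (\<Sum>k<a. c k * monom_vars I (e(i := e i - a + k)) x)"
      by (simp add: monom_vars_remove[OF I] rest power_add sum_distrib_left sum_distrib_right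
          algebra_simps)
    finally show ?thesis .
  qed
  then show ?thesis
    using that unfolding a_def by blast
qed

text \<open>Each monomial \<open>x\<^sub>i\<^sup>e\<close> with \<open>e \<ge> |K\<^sub>i|\<close> is rewritten on the grid through monomials of
  smaller degree, using that \<open>\<Prod>\<^sub>t\<^sub>\<in>\<^sub>K\<^sub>i (x\<^sub>i - t)\<close> vanishes on \<open>K\<^sub>i\<close>.\<close>

lemma reduced_rep_monom_vars:
  fixes K :: "nat \<Rightarrow> 'a::field set"
  assumes I: "finite I" and K: "\<forall>i\<in>I. finite (K i) \<and> K i \<noteq> {}"
  shows "reduced_rep I K (\<Sum>i\<in>I. e i) (monom_vars I e)"
proof (induction "\<Sum>i\<in>I. e i" arbitrary: e rule: less_induct)
  case less
  show ?case
  proof (cases "\<forall>i\<in>I. e i < card (K i)")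
    case True
    define q :: "(nat \<Rightarrow> nat) \<Rightarrow> 'a" where "q = (\<lambda>e'. if e' = e then 1 else 0)"
    have "{e'. q e' \<noteq> 0} = {e}"
      unfolding q_def by auto
    then show ?thesis
      unfolding reduced_rep_def finite_supp_def total_deg_le_def grid_reduced_def eval_vars_def
      using True by (intro exI[of _ q]) (auto simp: q_def)
  next
    case False
    then obtain i where i: "i \<in> I" "card (K i) \<le> e i"
      by (auto simp: not_less)
    define a where "a = card (K i)"
    define e' where "e' k = e(i := e i - a + k)" for k
    obtain c where c: "\<forall>x\<in>PiE I K. monom_vars I e x = (\<Sum>k<a. c k * monom_vars I (e' k) x)"
      using monom_vars_reduce_step[of I i K e] I K i unfolding a_def e'_def by blast
    have deg: "(\<Sum>j\<in>I. e' k j) < (\<Sum>j\<in>I. e j)" if "k < a" for k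
    proof -
      have "(\<Sum>j\<in>I - {i}. e' k j) = (\<Sum>j\<in>I - {i}. e j)"
        unfolding e'_def by (intro sum.cong) auto
      then show ?thesis
        using that i by (simp add: sum.remove[OF I i(1)] e'_def a_def)
    qed
    have "reduced_rep I K (\<Sum>i\<in>I. e i) (monom_vars I (e' k))" if "k < a" for k
      using reduced_rep_mono[OF less[OF deg[OF that]]] deg[OF that] by simp
    then have "reduced_rep I K (\<Sum>i\<in>I. e i) (\<lambda>x. \<Sum>k<a. c k * monom_vars I (e' k) x)"
      by (intro reduced_rep_lincomb) auto
    then show ?thesis
      by (rule reduced_rep_cong) (use c in auto)
  qed
qed

lemma reduced_rep_eval_vars:
  fixes K :: "nat \<Rightarrow> 'a::field set"
  assumes "finite I" "\<forall>i\<in>I. finite (K i) \<and> K i \<noteq> {}" "finite_supp p" "total_deg_le I p d"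
  shows "reduced_rep I K d (eval_vars I p)"
  unfolding eval_vars_def using assms
  by (intro reduced_rep_lincomb reduced_rep_mono[OF reduced_rep_monom_vars])
    (auto simp: finite_supp_def total_deg_le_def)

section \<open>Splitting off one variable\<close>

lemma bij_betw_PiE_update:
  assumes "i \<in> I"
  shows "bij_betw (\<lambda>(y, t). y(i := t)) (PiE (I - {i}) K \<times> K i) (PiE I K)"
proof (rule bij_betwI[where g = "\<lambda>x. (x(i := undefined), x i)"])
  show "(\<lambda>(y, t). y(i := t)) \<in> PiE (I - {i}) K \<times> K i \<rightarrow> PiE I K"
    and "(\<lambda>x. (x(i := undefined), x i)) \<in> PiE I K \<rightarrow> PiE (I - {i}) K \<times> K i"
    using assms by (auto simp: PiE_def Pi_def extensional_def)
  show "(\<lambda>x. (x(i := undefined), x i)) ((\<lambda>(y, t). y(i := t)) z) = z"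
    if "z \<in> PiE (I - {i}) K \<times> K i" for z
    using that by (cases z) (auto simp: PiE_def extensional_def fun_eq_iff)
qed simp

lemma card_PiE_filter_fibres:
  assumes "i \<in> I" "finite (PiE (I - {i}) K)" "finite (K i)"
  shows "card {x\<in>PiE I K. P x} = (\<Sum>y\<in>PiE (I - {i}) K. card {t\<in>K i. P (y(i := t))})"
proof -
  let ?f = "\<lambda>(y, t). y(i := t)" and ?S = "SIGMA y:PiE (I - {i}) K. {t\<in>K i. P (y(i := t))}"
  have bij: "bij_betw ?f (PiE (I - {i}) K \<times> K i) (PiE I K)"
    by (rule bij_betw_PiE_update[OF assms(1)])
  have S: "?S = {z \<in> PiE (I - {i}) K \<times> K i. P (?f z)}"
    by auto
  have "bij_betw ?f ?S {x\<in>PiE I K. P x}"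
    unfolding S by (rule bij_betw_Collect[OF bij]) simp
  then have "card {x\<in>PiE I K. P x} = card ?S"
    by (rule bij_betw_same_card[symmetric])
  then show ?thesis
    using assms(2,3) by simp
qed

text \<open>The coefficient of \<open>x\<^sub>i\<^sup>j\<close> as a polynomial in the other variables: the exponent of \<open>x\<^sub>i\<close>
  is kept in the monomials but ignored when evaluating over \<open>I - {i}\<close>.\<close>

definition var_coeff :: "((nat \<Rightarrow> nat) \<Rightarrow> 'a::zero) \<Rightarrow> nat \<Rightarrow> nat \<Rightarrow> (nat \<Rightarrow> nat) \<Rightarrow> 'a" where
  "var_coeff p i j = (\<lambda>e. if e i = j then p e else 0)"

lemma finite_supp_var_coeff: "finite_supp p \<Longrightarrow> finite_supp (var_coeff p i j)"
  unfolding finite_supp_def var_coeff_def by (rule finite_subset[rotated]) auto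

lemma eval_vars_update:
  fixes p :: "(nat \<Rightarrow> nat) \<Rightarrow> 'a::comm_ring_1"
  assumes I: "finite I" "i \<in> I" and p: "finite_supp p" and deg: "\<forall>e. p e \<noteq> 0 \<longrightarrow> e i < N"
  shows "eval_vars I p (y(i := t)) = (\<Sum>j<N. eval_vars (I - {i}) (var_coeff p i j) y * t ^ j)"
proof -
  define S where "S = {e. p e \<noteq> 0}"
  have S: "finite S"
    using p unfolding finite_supp_def S_def .
  have mon: "monom_vars I e (y(i := t)) = t ^ e i * monom_vars (I - {i}) e y" for e
    unfolding monom_vars_remove[OF I] by (simp add: monom_vars_def)
  have "eval_vars (I - {i}) (var_coeff p i j) y = (\<Sum>e\<in>S. var_coeff p i j e * monom_vars (I - {i}) e y)"
    for j by (rule eval_vars_superset[OF S]) (auto simp: S_def var_coeff_def)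
  then have "(\<Sum>j<N. eval_vars (I - {i}) (var_coeff p i j) y * t ^ j)
      = (\<Sum>j<N. \<Sum>e\<in>S. var_coeff p i j e * monom_vars (I - {i}) e y * t ^ j)"
    by (simp add: sum_distrib_right)
  also have "\<dots> = (\<Sum>e\<in>S. \<Sum>j<N. var_coeff p i j e * monom_vars (I - {i}) e y * t ^ j)"
    by (rule sum.swap)
  also have "\<dots> = (\<Sum>e\<in>S. p e * monom_vars I e (y(i := t)))"
  proof (intro sum.cong refl)
    fix e
    assume "e \<in> S"
    then have "e i \<in> {..<N}"
      using deg by (auto simp: S_def)
    then have "(\<Sum>j<N. var_coeff p i j e * monom_vars (I - {i}) e y * t ^ j)
        = (\<Sum>j\<in>{e i}. var_coeff p i j e * monom_vars (I - {i}) e y * t ^ j)"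
      by (intro sum.mono_neutral_right) (auto simp: var_coeff_def)
    then show "(\<Sum>j<N. var_coeff p i j e * monom_vars (I - {i}) e y * t ^ j)
        = p e * monom_vars I e (y(i := t))"
      by (simp add: var_coeff_def mon)
  qed
  finally show ?thesis
    by (simp add: eval_vars_def S_def)
qed

lemma poly_sum_monom:
  fixes c :: "nat \<Rightarrow> 'a::comm_ring_1"
  shows "poly (\<Sum>k<N. monom (c k) k) t = (\<Sum>k<N. c k * t ^ k)"
  by (simp add: poly_sum poly_monom)

lemma coeff_sum_monom:
  fixes c :: "nat \<Rightarrow> 'a::comm_ring_1"
  shows "coeff (\<Sum>k<N. monom (c k) k) j = (if j < N then c j else 0)"
  by (simp add: coeff_sum coeff_monom)

lemma card_nonroots_power_sum:
  fixes c :: "nat \<Rightarrow> 'a::field"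
  assumes "finite A" "j0 < N" "c j0 \<noteq> 0" "\<forall>k. j0 < k \<longrightarrow> k < N \<longrightarrow> c k = 0"
  shows "card A - j0 \<le> card {t\<in>A. (\<Sum>k<N. c k * t ^ k) \<noteq> 0}"
proof -
  define P where "P = (\<Sum>k<N. monom (c k) k)"
  have "coeff P j0 \<noteq> 0"
    using assms(2,3) by (simp add: P_def coeff_sum_monom)
  then have "P \<noteq> 0"
    by auto
  have "degree P \<le> j0"
    using assms(4) by (intro degree_le) (auto simp: P_def coeff_sum_monom)
  have "card {t\<in>A. poly P t = 0} \<le> card {t. poly P t = 0}"
    using poly_roots_finite[OF \<open>P \<noteq> 0\<close>] by (intro card_mono) auto
  also have "\<dots> \<le> degree P"
    by (rule card_poly_roots_bound[OF \<open>P \<noteq> 0\<close>])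
  also have "\<dots> \<le> j0"
    by fact
  finally have "card {t\<in>A. poly P t = 0} \<le> j0" .
  moreover have "card A = card {t\<in>A. poly P t = 0} + card {t\<in>A. poly P t \<noteq> 0}"
    using assms(1) by (subst card_Un_disjoint[symmetric]) (auto intro: arg_cong[where f = card])
  ultimately show ?thesis
    by (simp add: P_def poly_sum_monom)
qed

lemma power_sum_eq_0_if_roots:
  fixes c :: "nat \<Rightarrow> 'a::field"
  assumes "finite R" "N \<le> card R" "\<forall>t\<in>R. (\<Sum>k<N. c k * t ^ k) = 0"
  shows "(\<Sum>k<N. c k * t ^ k) = 0"
proof -
  define P where "P = (\<Sum>k<N. monom (c k) k)"
  have "P = 0"
  proof (rule ccontr)
    assume "P \<noteq> 0"
    then have "coeff P (degree P) \<noteq> 0"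
      by simp
    then have "degree P < N"
      by (simp add: P_def coeff_sum_monom split: if_splits)
    moreover have "card R \<le> card {t. poly P t = 0}"
      using assms(3) poly_roots_finite[OF \<open>P \<noteq> 0\<close>] by (intro card_mono) (auto simp: P_def poly_sum_monom)
    ultimately show False
      using card_poly_roots_bound[OF \<open>P \<noteq> 0\<close>] assms(2) by linarith
  qed
  then show ?thesis
    using poly_sum_monom[where N = N and c = c] by (simp add: P_def)
qed

section \<open>The footprint lower bound\<close>

lemma total_deg_le_var_coeff:
  assumes "finite I" "i \<in> I" "total_deg_le I p d"
  shows "total_deg_le (I - {i}) (var_coeff p i j) (d - j)"
  using assms unfolding total_deg_le_def var_coeff_def by (auto simp: sum.remove)

lemma grid_reduced_var_coeff: "grid_reduced I K p \<Longrightarrow> grid_reduced (I - {i}) K (var_coeff p i j)"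
  unfolding grid_reduced_def var_coeff_def by auto

lemma eval_vars_nonzero_imp_support: "eval_vars I p x \<noteq> 0 \<Longrightarrow> \<exists>e. p e \<noteq> 0"
  unfolding eval_vars_def by (rule ccontr) simp

lemma var_coeff_nonzero_imp_le_deg:
  assumes "finite I" "i \<in> I" "total_deg_le I p d" "var_coeff p i j e \<noteq> 0"
  shows "j \<le> d"
proof -
  have "e i = j" "p e \<noteq> 0"
    using assms(4) by (auto simp: var_coeff_def split: if_splits)
  moreover have "e i \<le> (\<Sum>k\<in>I. e k)"
    using assms(1,2) by (intro member_le_sum) auto
  ultimately show ?thesis
    using assms(3) unfolding total_deg_le_def by fastforce
qed

lemma nonvanishing_top_coeff:
  fixes a :: nat
  assumes "\<exists>y\<in>Y. \<exists>j<a. c j y \<noteq> 0"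
  obtains j0 where "j0 < a" "\<exists>y\<in>Y. c j0 y \<noteq> 0" "\<forall>j. j0 < j \<longrightarrow> j < a \<longrightarrow> (\<forall>y\<in>Y. c j y = 0)"
proof -
  define J where "J = {j. j < a \<and> (\<exists>y\<in>Y. c j y \<noteq> 0)}"
  have J: "finite J"
    by (simp add: J_def)
  moreover have "J \<noteq> {}"
    using assms by (auto simp: J_def)
  ultimately have "Max J \<in> J"
    by simp
  moreover have "c j y = 0" if "Max J < j" "j < a" "y \<in> Y" for j y
  proof (rule ccontr)
    assume "c j y \<noteq> 0"
    then have "j \<in> J"
      using that by (auto simp: J_def)
    then show False
      using Max_ge[OF J] that(1) by (simp add: not_le[symmetric])
  qed
  ultimately show ?thesis
    using that[of "Max J"] unfolding J_def by blast
qed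

text \<open>Along each line in direction \<open>i\<close> through a point \<open>y\<close> where the top coefficient does not
  vanish, \<open>p\<close> is a univariate polynomial of degree \<open>j\<^sub>0\<close>, so it has at most \<open>j\<^sub>0\<close> zeros there.\<close>

lemma card_nonzero_ge_top_coeff:
  fixes p :: "(nat \<Rightarrow> nat) \<Rightarrow> 'a::field"
  assumes I: "finite I" "i \<in> I" and K: "\<forall>j\<in>I. finite (K j)"
    and p: "finite_supp p" "\<forall>e. p e \<noteq> 0 \<longrightarrow> e i < card (K i)"
    and top: "j0 < card (K i)"
      "\<forall>j. j0 < j \<longrightarrow> j < card (K i) \<longrightarrow>
         (\<forall>y\<in>PiE (I - {i}) K. eval_vars (I - {i}) (var_coeff p i j) y = 0)"
  shows "(card (K i) - j0) * card {y\<in>PiE (I - {i}) K. eval_vars (I - {i}) (var_coeff p i j0) y \<noteq> 0}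
           \<le> card {x\<in>PiE I K. eval_vars I p x \<noteq> 0}"
proof -
  let ?J = "I - {i}" and ?a = "card (K i)"
  define Y0 where "Y0 = {y\<in>PiE ?J K. eval_vars ?J (var_coeff p i j0) y \<noteq> 0}"
  define nz where "nz y = card {t\<in>K i. eval_vars I p (y(i := t)) \<noteq> 0}" for y
  have fin: "finite (PiE ?J K)"
    using I K by (intro finite_PiE) auto
  have "?a - j0 \<le> nz y" if "y \<in> Y0" for y
  proof -
    have "?a - j0 \<le> card {t\<in>K i. (\<Sum>j<?a. eval_vars ?J (var_coeff p i j) y * t ^ j) \<noteq> 0}"
      by (rule card_nonroots_power_sum) (use K I top that in \<open>auto simp: Y0_def\<close>)
    then show ?thesis
      unfolding nz_def eval_vars_update[OF I p] .
  qed
  then have "(?a - j0) * card Y0 \<le> (\<Sum>y\<in>Y0. nz y)"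
    using sum_mono[of Y0 "\<lambda>_. ?a - j0" nz] by (simp add: mult.commute)
  also have "\<dots> \<le> (\<Sum>y\<in>PiE ?J K. nz y)"
    using fin by (intro sum_mono2) (auto simp: Y0_def)
  also have "\<dots> = card {x\<in>PiE I K. eval_vars I p x \<noteq> 0}"
    unfolding nz_def using fin K I by (intro card_PiE_filter_fibres[symmetric]) auto
  finally show ?thesis
    unfolding Y0_def .
qed

lemma exists_top_var_coeff:
  fixes p :: "(nat \<Rightarrow> nat) \<Rightarrow> 'a::field"
  assumes I: "finite I" "i \<in> I"
    and p: "finite_supp p" "total_deg_le I p d" "\<forall>e. p e \<noteq> 0 \<longrightarrow> e i < a"
    and x: "x \<in> PiE I K" "eval_vars I p x \<noteq> 0"
  obtains j0 where "j0 < a" "j0 \<le> d"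
    "\<exists>y\<in>PiE (I - {i}) K. eval_vars (I - {i}) (var_coeff p i j0) y \<noteq> 0"
    "\<forall>j. j0 < j \<longrightarrow> j < a \<longrightarrow> (\<forall>y\<in>PiE (I - {i}) K. eval_vars (I - {i}) (var_coeff p i j) y = 0)"
proof -
  let ?J = "I - {i}" and ?f = "var_coeff p i"
  have "eval_vars I p x = (\<Sum>j<a. eval_vars ?J (?f j) (x(i := undefined)) * x i ^ j)"
    using eval_vars_update[OF I p(1,3), of "x(i := undefined)" "x i"] by simp
  then obtain j where "j < a" "eval_vars ?J (?f j) (x(i := undefined)) \<noteq> 0"
    using x(2) by (auto elim: sum.not_neutral_contains_not_neutral)
  moreover have "x(i := undefined) \<in> PiE ?J K"
    using x(1) by (auto simp: PiE_def extensional_def)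
  ultimately obtain j0 where j0: "j0 < a" "\<exists>y\<in>PiE ?J K. eval_vars ?J (?f j0) y \<noteq> 0"
    and top: "\<forall>j. j0 < j \<longrightarrow> j < a \<longrightarrow> (\<forall>y\<in>PiE ?J K. eval_vars ?J (?f j) y = 0)"
    using nonvanishing_top_coeff[of "PiE ?J K" a "\<lambda>j. eval_vars ?J (?f j)"] by blast
  obtain e where "?f j0 e \<noteq> 0"
    using j0(2) eval_vars_nonzero_imp_support by blast
  then have "j0 \<le> d"
    by (rule var_coeff_nonzero_imp_le_deg[OF I p(2)])
  then show ?thesis
    using that j0 top by blast
qed

text \<open>Induction on the number of variables, splitting off the one with the smallest \<open>K\<^sub>i\<close>.\<close>

lemma cart_min_weight_le_card_nonzero:
  fixes K :: "nat \<Rightarrow> 'a::field set"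
  assumes "finite I" "\<forall>i\<in>I. finite (K i) \<and> K i \<noteq> {}"
    and "\<forall>i\<in>I. \<forall>i'\<in>I. i \<le> i' \<longrightarrow> card (K i) \<le> card (K i')"
    and "finite_supp p" "total_deg_le I p d" "grid_reduced I K p"
    and "\<exists>x\<in>PiE I K. eval_vars I p x \<noteq> 0"
  shows "cart_min_weight (map (\<lambda>i. card (K i)) (sorted_list_of_set I)) d
           \<le> card {x\<in>PiE I K. eval_vars I p x \<noteq> 0}"
  using assms
proof (induction "card I" arbitrary: I p d)
  case 0
  then have "{x\<in>PiE I K. eval_vars I p x \<noteq> 0} = {\<lambda>_. undefined}"
    by auto
  then show ?case
    using 0 by simp
next
  case (Suc m)
  note I = \<open>finite I\<close>
  define i where "i = Min I"
  define J where "J = I - {i}"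
  define a where "a = card (K i)"
  define f where "f j = var_coeff p i j" for j
  have "I \<noteq> {}"
    using Suc.hyps(2) by auto
  then have i: "i \<in> I" and sorted: "sorted_list_of_set I = i # sorted_list_of_set J"
    using I sorted_list_of_set_nonempty unfolding i_def J_def by auto
  have red: "\<forall>e. p e \<noteq> 0 \<longrightarrow> e i < a"
    using Suc.prems(6) i unfolding grid_reduced_def a_def by auto
  obtain j0 where j0: "j0 < a" "j0 \<le> d" "\<exists>y\<in>PiE J K. eval_vars J (f j0) y \<noteq> 0"
    and top: "\<forall>j. j0 < j \<longrightarrow> j < a \<longrightarrow> (\<forall>y\<in>PiE J K. eval_vars J (f j) y = 0)"
    using Suc.prems(7) exists_top_var_coeff[OF I i Suc.prems(4,5) red]
    unfolding J_def f_def by blast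
  have IH: "cart_min_weight (map (\<lambda>i. card (K i)) (sorted_list_of_set J)) (d - j0)
      \<le> card {y\<in>PiE J K. eval_vars J (f j0) y \<noteq> 0}"
    using Suc.hyps(2) Suc.prems i j0(3) unfolding f_def J_def
    by (intro Suc.hyps(1)) (auto simp: total_deg_le_var_coeff grid_reduced_var_coeff
        finite_supp_var_coeff)
  have "cart_min_weight (map (\<lambda>i. card (K i)) (sorted_list_of_set I)) d
      \<le> (a - j0) * cart_min_weight (map (\<lambda>i. card (K i)) (sorted_list_of_set J)) (d - j0)"
    unfolding sorted list.map(2) a_def[symmetric] using Suc.prems(2,3) I i j0(1,2)
    by (intro cart_min_weight_Cons_le) (auto simp: J_def a_def i_def Suc_le_eq card_gt_0_iff)
  also have "\<dots> \<le> (a - j0) * card {y\<in>PiE J K. eval_vars J (f j0) y \<noteq> 0}"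
    using IH by simp
  also have "\<dots> \<le> card {x\<in>PiE I K. eval_vars I p x \<noteq> 0}"
    unfolding J_def f_def a_def
    by (rule card_nonzero_ge_top_coeff[OF I i _ Suc.prems(4)])
      (use Suc.prems(2) red top j0 in \<open>auto simp: J_def f_def a_def\<close>)
  finally show ?case .
qed

section \<open>Codewords of product form\<close>

lemma exists_mpoly_prod_polys:
  fixes g :: "nat \<Rightarrow> 'a::comm_ring_1 poly"
  assumes I: "finite I"
  obtains p where "finite_supp p"
    "\<forall>e. p e \<noteq> 0 \<longrightarrow> (\<forall>i\<in>I. e i \<le> degree (g i)) \<and> (\<forall>i. i \<notin> I \<longrightarrow> e i = 0)"
    "\<forall>x. eval_vars I p x = (\<Prod>i\<in>I. poly (g i) (x i))"
proof -
  define E where "E = {e. (\<forall>i\<in>I. e i \<le> degree (g i)) \<and> (\<forall>i. i \<notin> I \<longrightarrow> e i = 0)}"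
  define P where "P = PiE I (\<lambda>i. {..degree (g i)})"
  define ext where "ext f = (\<lambda>i. if i \<in> I then f i else 0)" for f :: "nat \<Rightarrow> nat"
  have bij: "bij_betw ext P E"
  proof (rule bij_betwI[where g = "\<lambda>e. restrict e I"])
    show "ext \<in> P \<rightarrow> E" "(\<lambda>e. restrict e I) \<in> E \<rightarrow> P"
      unfolding P_def E_def ext_def by auto
    show "restrict (ext f) I = f" if "f \<in> P" for f
      using that unfolding P_def ext_def by (auto simp: PiE_def extensional_def fun_eq_iff)
    show "ext (restrict e I) = e" if "e \<in> E" for e
      using that unfolding E_def ext_def by (auto simp: fun_eq_iff)
  qed
  have "finite P"
    unfolding P_def using I by (intro finite_PiE) auto
  then have E: "finite E"
    using bij bij_betw_finite by blast
  define p where "p e = (if e \<in> E then (\<Prod>i\<in>I. coeff (g i) (e i)) else 0)" for e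
  have supp: "{e. p e \<noteq> 0} \<subseteq> E"
    unfolding p_def by (auto split: if_splits)
  have "eval_vars I p x = (\<Prod>i\<in>I. poly (g i) (x i))" for x
  proof -
    have "eval_vars I p x = (\<Sum>e\<in>E. \<Prod>i\<in>I. coeff (g i) (e i) * x i ^ e i)"
      unfolding eval_vars_superset[OF E supp] p_def monom_vars_def by (simp add: prod.distrib)
    also have "\<dots> = (\<Sum>f\<in>P. \<Prod>i\<in>I. coeff (g i) (f i) * x i ^ f i)"
      by (subst sum.reindex_bij_betw[OF bij, symmetric]) (auto simp: ext_def intro!: sum.cong prod.cong)
    also have "\<dots> = (\<Prod>i\<in>I. \<Sum>k\<le>degree (g i). coeff (g i) k * x i ^ k)"
      unfolding P_def using I by (rule prod_sum_PiE[symmetric]) simp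
    finally show ?thesis
      by (simp add: poly_altdef)
  qed
  moreover have "finite_supp p"
    unfolding finite_supp_def using supp E by (rule finite_subset)
  ultimately show ?thesis
    using that supp unfolding E_def by blast
qed

lemma hweight_Psi_prod_polys:
  fixes g :: "nat \<Rightarrow> 'a::field poly"
  assumes "\<forall>x. eval_vars {1..n} p x = (\<Prod>i\<in>{1..n}. poly (g i) (x i))"
  shows "hweight (cart_points n K) (Psi n K p) = (\<Prod>i\<in>{1..n}. card {t\<in>K i. poly (g i) t \<noteq> 0})"
proof -
  have "{x\<in>cart_points n K. Psi n K p x \<noteq> 0} = PiE {1..n} (\<lambda>i. {t\<in>K i. poly (g i) t \<noteq> 0})"
    using assms unfolding Psi_def cart_points_def mpoly_eval_eq_eval_vars
    by (auto simp: PiE_def Pi_def prod_zero_iff)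
  then show ?thesis
    unfolding hweight_def by (simp add: card_PiE)
qed

lemma card_nonzero_vanishing_poly:
  assumes "finite K" "T \<subseteq> K"
  shows "card {t\<in>K. poly (vanishing_poly T) t \<noteq> (0::'a::field)} = card K - card T"
proof -
  have "finite T"
    using assms finite_subset by blast
  then have "{t\<in>K. poly (vanishing_poly T) t \<noteq> 0} = K - T"
    by (auto simp: poly_vanishing_poly_eq_0_iff)
  then show ?thesis
    using assms by (simp add: card_Diff_subset finite_subset)
qed

text \<open>The factors of \<open>\<Prod>\<^sub>i\<^sub>\<in>\<^sub>A \<Prod>\<^sub>t\<^sub>\<in>\<^sub>K\<^sub>i\<^sub>-\<^sub>{\<^sub>b\<^sub>i\<^sub>} (X\<^sub>i - t) \<Prod>\<^sub>t\<^sub>\<in>\<^sub>S (X\<^sub>i\<^sub>1 - t)\<close>, which is nonzero exactly at the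
  points with \<open>x\<^sub>i = b\<^sub>i\<close> for \<open>i \<in> A\<close> and \<open>x\<^sub>i\<^sub>1 \<notin> S\<close>.\<close>

definition witness_factor :: "(nat \<Rightarrow> 'a::comm_ring_1 set) \<Rightarrow> nat set \<Rightarrow> nat \<Rightarrow> 'a set \<Rightarrow> nat \<Rightarrow> 'a poly" where
  "witness_factor K A i1 S i = (if i \<in> A then vanishing_poly (K i - {SOME t. t \<in> K i})
                                else if i = i1 then vanishing_poly S else 1)"

lemma
  fixes K :: "nat \<Rightarrow> 'a::field set"
  assumes "finite (K i)" "K i \<noteq> {}" "i1 \<notin> A" "S \<subseteq> K i1" "finite S"
  shows degree_witness_factor: "degree (witness_factor K A i1 S i)
      = (if i \<in> A then card (K i) - 1 else if i = i1 then card S else 0)"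
    and card_nonzero_witness_factor: "card {t\<in>K i. poly (witness_factor K A i1 S i) t \<noteq> 0}
      = (if i \<in> A then 1 else if i = i1 then card (K i1) - card S else card (K i))"
proof -
  have b: "(SOME t. t \<in> K i) \<in> K i"
    using assms(2) by (simp add: some_in_eq)
  then show "degree (witness_factor K A i1 S i)
      = (if i \<in> A then card (K i) - 1 else if i = i1 then card S else 0)"
    using assms by (auto simp: witness_factor_def degree_vanishing_poly)
  show "card {t\<in>K i. poly (witness_factor K A i1 S i) t \<noteq> 0}
      = (if i \<in> A then 1 else if i = i1 then card (K i1) - card S else card (K i))"
    using assms b by (auto simp: witness_factor_def card_nonzero_vanishing_poly card_Diff_singleton
        Suc_le_eq card_gt_0_iff)
qed

lemma prod_eq_remove_ones:
  assumes "finite I" "A \<subseteq> I" "i1 \<in> I" "i1 \<notin> A" "\<forall>i\<in>A. N i = (1::nat)"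
  shows "(\<Prod>i\<in>I. N i) = N i1 * (\<Prod>i\<in>I - A - {i1}. N i)"
proof -
  have "(\<Prod>i\<in>I. N i) = (\<Prod>i\<in>I - A. N i) * (\<Prod>i\<in>A. N i)"
    by (rule prod.subset_diff[OF assms(2,1)])
  also have "(\<Prod>i\<in>I - A. N i) = N i1 * (\<Prod>i\<in>I - A - {i1}. N i)"
    using assms(1,3,4) by (subst prod.remove[of _ i1]) auto
  finally show ?thesis
    using assms(5) by simp
qed

lemma witness_factor_exponents:
  fixes K :: "nat \<Rightarrow> 'a::field set"
  assumes K: "\<forall>i\<in>{1..n}. finite (K i) \<and> K i \<noteq> {}"
    and A: "A \<subseteq> {1..n}" and i1: "i1 \<in> {1..n}" "i1 \<notin> A" and S: "S \<subseteq> K i1"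
    and e: "\<forall>i\<in>{1..n}. e i \<le> degree (witness_factor K A i1 S i)"
  shows "mono_deg n e \<le> (\<Sum>i\<in>A. card (K i) - 1) + card S"
    and "\<forall>i\<in>{1..n} - A - {i1}. e i = 0" and "e i1 \<le> card S"
proof -
  have "finite S"
    using S K i1 finite_subset by blast
  then have deg: "e i \<le> (if i \<in> A then card (K i) - 1 else if i = i1 then card S else 0)"
    if "i \<in> {1..n}" for i
    using e that K i1(2) S by (simp add: degree_witness_factor)
  show zero: "\<forall>i\<in>{1..n} - A - {i1}. e i = 0"
  proof
    fix i
    assume "i \<in> {1..n} - A - {i1}"
    then show "e i = 0"
      using deg[of i] by simp
  qed
  show "e i1 \<le> card S"
    using deg[OF i1(1)] i1(2) by simp
  have "mono_deg n e = (\<Sum>i\<in>insert i1 A. e i)"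
    unfolding mono_deg_def using A i1 zero by (intro sum.mono_neutral_right) auto
  also have "\<dots> \<le> (\<Sum>i\<in>insert i1 A. if i \<in> A then card (K i) - 1 else if i = i1 then card S else 0)"
  proof (rule sum_mono)
    fix i
    assume "i \<in> insert i1 A"
    then have "i \<in> {1..n}"
      using A i1 by auto
    then show "e i \<le> (if i \<in> A then card (K i) - 1 else if i = i1 then card S else 0)"
      by (rule deg)
  qed
  finally show "mono_deg n e \<le> (\<Sum>i\<in>A. card (K i) - 1) + card S"
    using A i1 finite_subset[OF A] by simp
qed

lemma exists_product_codeword:
  fixes K :: "nat \<Rightarrow> 'a::field set"
  assumes K: "\<forall>i\<in>{1..n}. finite (K i) \<and> K i \<noteq> {}"
    and A: "A \<subseteq> {1..n}" and i1: "i1 \<in> {1..n}" "i1 \<notin> A"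
    and S: "S \<subseteq> K i1" "card S < card (K i1)"
  obtains p where "is_mpoly n p"
    "\<forall>e. p e \<noteq> 0 \<longrightarrow> mono_deg n e \<le> (\<Sum>i\<in>A. card (K i) - 1) + card S
        \<and> (\<forall>i\<in>{1..n} - A - {i1}. e i = 0) \<and> e i1 \<le> card S"
    "hweight (cart_points n K) (Psi n K p) = (card (K i1) - card S) * (\<Prod>i\<in>{1..n} - A - {i1}. card (K i))"
    "\<exists>x\<in>cart_points n K. Psi n K p x \<noteq> 0"
proof -
  let ?g = "witness_factor K A i1 S"
  obtain p where p: "finite_supp p"
    "\<forall>e. p e \<noteq> 0 \<longrightarrow> (\<forall>i\<in>{1..n}. e i \<le> degree (?g i)) \<and> (\<forall>i. i \<notin> {1..n} \<longrightarrow> e i = 0)"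
    and eval: "\<forall>x. eval_vars {1..n} p x = (\<Prod>i\<in>{1..n}. poly (?g i) (x i))"
    by (rule exists_mpoly_prod_polys[of "{1..n}" ?g]) auto
  have "is_mpoly n p"
    using p(1,2) unfolding is_mpoly_def finite_supp_def by blast
  moreover have "mono_deg n e \<le> (\<Sum>i\<in>A. card (K i) - 1) + card S
      \<and> (\<forall>i\<in>{1..n} - A - {i1}. e i = 0) \<and> e i1 \<le> card S" if "p e \<noteq> 0" for e
    using witness_factor_exponents[OF K A i1 S(1)] p(2) that by blast
  moreover have hw: "hweight (cart_points n K) (Psi n K p)
      = (card (K i1) - card S) * (\<Prod>i\<in>{1..n} - A - {i1}. card (K i))"
    unfolding hweight_Psi_prod_polys[OF eval] using K A i1 S(1) finite_subset[OF S(1)]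
    by (subst prod_eq_remove_ones[OF _ A i1]) (auto simp: card_nonzero_witness_factor intro!: prod.cong)
  moreover have "0 < (\<Prod>i\<in>{1..n} - A - {i1}. card (K i))"
    using K by (simp add: prod_pos card_gt_0_iff)
  then have "hweight (cart_points n K) (Psi n K p) \<noteq> 0"
    using hw S(2) by simp
  then have "{x\<in>cart_points n K. Psi n K p x \<noteq> 0} \<noteq> {}"
    unfolding hweight_def by (intro notI) simp
  ultimately show ?thesis
    using that by blast
qed

section \<open>Dimension bounds in spaces of words\<close>

interpretation funspace: vector_space "\<lambda>(a::'a::field) (v::'b \<Rightarrow> 'a) x. a * v x"
  by unfold_locales (auto simp: fun_eq_iff algebra_simps)

lemma sum_fun_apply: "(sum f A) y = (\<Sum>a\<in>A. f a y)"
  by (induction A rule: infinite_finite_induct) auto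

lemma independent_supported_card_le:
  fixes B :: "('b \<Rightarrow> 'a::field) set"
  assumes P: "finite P" and B: "funspace.independent B" "\<forall>c\<in>B. \<forall>y. y \<notin> P \<longrightarrow> c y = 0"
  shows "finite B \<and> card B \<le> card P"
proof -
  let ?W = "(\<lambda>x y. if y = x then (1::'a) else 0) ` P"
  have "c \<in> funspace.span ?W" if "c \<in> B" for c
  proof -
    have "c = (\<Sum>x\<in>P. (\<lambda>y. c x * (if y = x then 1 else 0)))"
      using B(2) that P by (auto simp: fun_eq_iff sum_fun_apply if_distrib cong: if_cong)
    also have "\<dots> \<in> funspace.span ?W"
      by (intro funspace.span_sum funspace.span_scale[where c = "c _", unfolded] funspace.span_base)
        auto
    finally show ?thesis .
  qed
  then have "finite B \<and> card B \<le> card ?W"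
    using P by (intro funspace.independent_span_bound[OF _ B(1)]) auto
  moreover have "card ?W \<le> card P"
    using P by (rule card_image_le)
  ultimately show ?thesis
    by simp
qed

text \<open>The restriction of words to \<open>P\<close> is linear and, by assumption, injective on \<open>V\<close>.\<close>

lemma dim_le_card_if_vanishing_determines:
  fixes V :: "('b \<Rightarrow> 'a::field) set"
  assumes V: "funspace.subspace V" and P: "finite P"
    and det: "\<And>c. c \<in> V \<Longrightarrow> (\<forall>x\<in>P. c x = 0) \<Longrightarrow> c = 0"
  shows "funspace.dim V \<le> card P"
proof -
  obtain B where B: "B \<subseteq> V" "funspace.independent B" "V \<subseteq> funspace.span B"
    "card B = funspace.dim V"
    by (rule funspace.basis_exists)
  define R where "R c = (\<lambda>y. if y \<in> P then c y else 0)" for c :: "'b \<Rightarrow> 'a"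
  interpret R: module_hom "\<lambda>(a::'a) (v::'b \<Rightarrow> 'a) x. a * v x" "\<lambda>(a::'a) (v::'b \<Rightarrow> 'a) x. a * v x" R
    by unfold_locales (auto simp: R_def fun_eq_iff algebra_simps)
  have span: "funspace.span B \<subseteq> V"
    using B(1) V by (rule funspace.span_minimal)
  have inj: "inj_on R (funspace.span B)"
  proof (rule inj_onI)
    fix c c'
    assume c: "c \<in> funspace.span B" "c' \<in> funspace.span B" "R c = R c'"
    have "(c - c') x = 0" if "x \<in> P" for x
      using fun_cong[OF c(3), of x] that by (simp add: R_def)
    moreover have "c - c' \<in> V"
      using c span V by (auto intro: funspace.subspace_diff)
    ultimately show "c = c'"
      using det[of "c - c'"] by simp
  qed
  have "card (R ` B) \<le> card P"
    using independent_supported_card_le[OF P R.independent_injective_image[OF B(2) inj]]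
    by (auto simp: R_def)
  then show ?thesis
    using card_image[OF inj_on_subset[OF inj funspace.span_superset]] B(4) by simp
qed

lemma exists_nonzero_vanishing_on:
  assumes "funspace.subspace V" "finite P" "card P < funspace.dim V"
  obtains c where "c \<in> V" "c \<noteq> 0" "\<forall>x\<in>P. c x = 0"
  using dim_le_card_if_vanishing_determines[OF assms(1,2)] assms(3) that by force

lemma dim_pos_if_nonzero:
  fixes V :: "('b \<Rightarrow> 'a::field) set"
  assumes X: "finite X" and supp: "\<And>c x. c \<in> V \<Longrightarrow> x \<notin> X \<Longrightarrow> c x = 0"
    and c: "c \<in> V" "c \<noteq> 0"
  shows "1 \<le> funspace.dim V"
proof -
  obtain B where B: "B \<subseteq> V" "funspace.independent B" "V \<subseteq> funspace.span B"
    "card B = funspace.dim V"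
    by (rule funspace.basis_exists)
  have "finite B"
    using independent_supported_card_le[OF X B(2)] B(1) supp by blast
  moreover have "B \<noteq> {}"
    using B(3) c by auto
  ultimately show ?thesis
    by (simp add: B(4)[symmetric] Suc_le_eq card_gt_0_iff)
qed

section \<open>Minimum distance\<close>

lemma finite_nonzero_hweights:
  "finite X \<Longrightarrow> finite {hweight X c | c. c \<in> C \<and> (\<exists>x\<in>X. c x \<noteq> 0)}"
  unfolding hweight_def by (rule finite_subset[of _ "{..card X}"]) (auto intro: card_mono)

lemma min_dist_le_hweight:
  assumes "finite X" "c \<in> C" "\<exists>x\<in>X. c x \<noteq> 0"
  shows "min_dist X C \<le> hweight X c"
  unfolding min_dist_def using assms finite_nonzero_hweights by (intro Min_le) auto

lemma min_dist_eqI: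
  assumes "finite X" "c \<in> C" "\<exists>x\<in>X. c x \<noteq> 0" "hweight X c = w"
    and "\<And>c. c \<in> C \<Longrightarrow> \<exists>x\<in>X. c x \<noteq> 0 \<Longrightarrow> w \<le> hweight X c"
  shows "min_dist X C = w"
  unfolding min_dist_def using assms finite_nonzero_hweights by (intro Min_eqI) auto

lemma min_dist_antimono:
  assumes "finite X" "D \<subseteq> C" "c \<in> D" "\<exists>x\<in>X. c x \<noteq> 0"
  shows "min_dist X C \<le> min_dist X D"
  unfolding min_dist_def using assms finite_nonzero_hweights by (intro Min_antimono) auto

section \<open>A Singleton-type bound for codes determined on lines\<close>

lemma ceiling_divide_minus_one:
  fixes k r :: nat
  assumes "1 \<le> k" "1 \<le> r"
  shows "int (nat (\<lceil>real k / real r\<rceil> - 1)) = \<lceil>real k / real r\<rceil> - 1"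
    and "nat (\<lceil>real k / real r\<rceil> - 1) * r < k"
proof -
  have pos: "1 \<le> \<lceil>real k / real r\<rceil>"
    using assms by (simp add: not_less[symmetric])
  then show "int (nat (\<lceil>real k / real r\<rceil> - 1)) = \<lceil>real k / real r\<rceil> - 1"
    by simp
  have "real (nat (\<lceil>real k / real r\<rceil> - 1)) < real k / real r"
    using pos ceiling_correct[of "real k / real r"] by simp
  then have "real (nat (\<lceil>real k / real r\<rceil> - 1) * r) < real k"
    using assms by (simp add: pos_less_divide_eq)
  then show "nat (\<lceil>real k / real r\<rceil> - 1) * r < k"
    by (simp only: of_nat_less_iff)
qed

locale line_code =
  fixes V :: "('b \<Rightarrow> 'a::field) set" and X :: "'b set"
    and Y :: "'c set" and line R :: "'c \<Rightarrow> 'b set" and q r :: nat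
  assumes subspace: "funspace.subspace V"
    and finite_index: "finite Y"
    and disjoint_lines: "disjoint_family_on line Y"
    and X_eq_lines: "X = (\<Union>y\<in>Y. line y)"
    and card_line: "y \<in> Y \<Longrightarrow> card (line y) = q"
    and R_subset: "y \<in> Y \<Longrightarrow> R y \<subseteq> line y"
    and card_R: "y \<in> Y \<Longrightarrow> card (R y) = r"
    and r_pos: "1 \<le> r" and r_le_q: "r \<le> q"
    and vanishes_outside: "c \<in> V \<Longrightarrow> x \<notin> X \<Longrightarrow> c x = 0"
    and determined_on_line: "c \<in> V \<Longrightarrow> y \<in> Y \<Longrightarrow> \<forall>x\<in>R y. c x = 0 \<Longrightarrow> x \<in> line y \<Longrightarrow> c x = 0"
begin

lemma finite_line:
  assumes "y \<in> Y"
  shows "finite (line y)"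
proof (rule ccontr)
  assume "infinite (line y)"
  then have "q = 0"
    using card_line[OF assms] by simp
  then show False
    using r_pos r_le_q by simp
qed

lemma finite_X: "finite X"
  using finite_index finite_line by (simp add: X_eq_lines)

lemma card_lines:
  assumes "T \<subseteq> Y"
  shows "card (\<Union>y\<in>T. line y) = card T * q"
proof -
  have "finite T"
    using assms finite_index by (rule finite_subset)
  moreover have "disjoint_family_on line T"
    using disjoint_lines assms by (rule disjoint_family_on_mono[rotated])
  ultimately have "card (\<Union>y\<in>T. line y) = (\<Sum>y\<in>T. card (line y))"
    using assms finite_line by (intro card_UN_disjoint) (auto simp: disjoint_family_on_def)
  also have "\<dots> = card T * q"
    using assms card_line by (simp add: subset_iff)
  finally show ?thesis .
qed

lemma card_X: "card X = card Y * q"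
  using card_lines by (simp add: X_eq_lines)

lemma vanishes_on_lines:
  assumes c: "c \<in> V" and T: "T \<subseteq> Y" and zero: "\<forall>x\<in>(\<Union>y\<in>T. R y). c x = 0"
    and x: "x \<in> (\<Union>y\<in>T. line y)"
  shows "c x = 0"
proof -
  obtain y where y: "y \<in> T" "x \<in> line y"
    using x by blast
  then have "\<forall>x\<in>R y. c x = 0"
    using zero by blast
  then show ?thesis
    using determined_on_line[OF c _ _ y(2)] T y(1) by blast
qed

lemma dim_le: "funspace.dim V \<le> card Y * r"
proof -
  have "funspace.dim V \<le> card (\<Union>y\<in>Y. R y)"
  proof (rule dim_le_card_if_vanishing_determines[OF subspace])
    show "finite (\<Union>y\<in>Y. R y)"
      using finite_index finite_subset[OF R_subset finite_line] by blast
    show "c = 0" if c: "c \<in> V" "\<forall>x\<in>(\<Union>y\<in>Y. R y). c x = 0" for c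
    proof
      fix x
      show "c x = 0 x"
        using vanishes_on_lines[OF c(1) order_refl c(2)] vanishes_outside[OF c(1)]
        by (cases "x \<in> X") (simp_all add: X_eq_lines)
    qed
  qed
  also have "\<dots> \<le> (\<Sum>y\<in>Y. card (R y))"
    by (rule card_UN_le[OF finite_index])
  also have "\<dots> = card Y * r"
    by (simp add: card_R)
  finally show ?thesis .
qed

text \<open>Vanishing on \<open>t\<close> full lines costs only \<open>t r\<close> linear conditions.\<close>

lemma exists_codeword_vanishing_on_lines:
  assumes T: "T \<subseteq> Y" and E: "finite E" and small: "card T * r + card E < funspace.dim V"
  obtains c where "c \<in> V" "c \<noteq> 0" "\<forall>x\<in>(\<Union>y\<in>T. line y) \<union> E. c x = 0"
proof -
  have finT: "finite T"
    using T finite_index by (rule finite_subset)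
  have "finite (R y)" if "y \<in> T" for y
    using T that finite_subset[OF R_subset finite_line] by blast
  then have fin: "finite ((\<Union>y\<in>T. R y) \<union> E)"
    using finT E by simp
  have "card ((\<Union>y\<in>T. R y) \<union> E) \<le> card (\<Union>y\<in>T. R y) + card E"
    by (rule card_Un_le)
  moreover have "card (\<Union>y\<in>T. R y) \<le> (\<Sum>y\<in>T. card (R y))"
    by (rule card_UN_le[OF finT])
  moreover have "(\<Sum>y\<in>T. card (R y)) = card T * r"
    using T card_R by (simp add: subset_iff)
  ultimately have "card ((\<Union>y\<in>T. R y) \<union> E) < funspace.dim V"
    using small by linarith
  then obtain c where c: "c \<in> V" "c \<noteq> 0" "\<forall>x\<in>(\<Union>y\<in>T. R y) \<union> E. c x = 0"
    by (rule exists_nonzero_vanishing_on[OF subspace fin])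
  have "\<forall>x\<in>(\<Union>y\<in>T. R y). c x = 0"
    using c(3) by simp
  then have "c x = 0" if "x \<in> (\<Union>y\<in>T. line y)" for x
    using vanishes_on_lines[OF c(1) T _ that] by simp
  then show ?thesis
    using c(3) by (intro that[OF c(1,2)]) auto
qed

lemma exists_low_weight_codeword:
  assumes t: "t * r < funspace.dim V"
  obtains c where "c \<in> V" "\<exists>x\<in>X. c x \<noteq> 0"
    "hweight X c + funspace.dim V + t * (q - r) \<le> card X + 1"
proof -
  let ?k = "funspace.dim V"
  have "t < card Y"
    using less_le_trans[OF t dim_le] by simp
  then obtain T where T: "T \<subseteq> Y" "card T = t"
    using obtain_subset_with_card_n[of t Y] by auto
  define Rest where "Rest = X - (\<Union>y\<in>T. line y)"
  have lines: "(\<Union>y\<in>T. line y) \<subseteq> X"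
    using T(1) by (auto simp: X_eq_lines)
  have card_Rest: "card Rest = card Y * q - t * q"
    unfolding Rest_def card_Diff_subset[OF finite_subset[OF lines finite_X] lines]
    using card_lines[OF T(1)] card_X T(2) by simp
  have prods: "(card Y - t) * r = card Y * r - t * r" "card Y * q - t * q = (card Y - t) * q"
    "t * (q - r) = t * q - t * r" "t * r \<le> t * q" "t * q \<le> card Y * q"
    using r_le_q \<open>t < card Y\<close> by (simp_all add: diff_mult_distrib diff_mult_distrib2)
  moreover have "(card Y - t) * r \<le> (card Y - t) * q"
    using r_le_q by simp
  ultimately have "?k - 1 - t * r \<le> card Rest"
    using dim_le card_Rest by linarith
  then obtain E where E: "E \<subseteq> Rest" "card E = ?k - 1 - t * r"
    using obtain_subset_with_card_n[of "?k - 1 - t * r" Rest] by auto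
  have finE: "finite E"
    by (rule finite_subset[OF E(1)]) (simp add: Rest_def finite_X)
  obtain c where c: "c \<in> V" "c \<noteq> 0" "\<forall>x\<in>(\<Union>y\<in>T. line y) \<union> E. c x = 0"
    by (rule exists_codeword_vanishing_on_lines[OF T(1) finE]) (use T(2) E(2) t in simp)
  have "{x\<in>X. c x \<noteq> 0} \<subseteq> Rest - E"
    using c(3) by (auto simp: Rest_def)
  then have "hweight X c \<le> card (Rest - E)"
    unfolding hweight_def by (rule card_mono[rotated]) (simp add: Rest_def finite_X)
  also have "\<dots> = card Rest - card E"
    by (rule card_Diff_subset[OF finE E(1)])
  finally have "hweight X c + ?k + t * (q - r) \<le> card X + 1"
    using card_Rest E card_X t prods \<open>?k - 1 - t * r \<le> card Rest\<close> by linarith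
  moreover have "\<exists>x\<in>X. c x \<noteq> 0"
    using c(1,2) vanishes_outside by (auto simp: fun_eq_iff)
  ultimately show ?thesis
    using that c(1) by blast
qed

theorem singleton_bound:
  assumes "\<exists>c\<in>V. c \<noteq> 0"
  shows "int (min_dist X V) \<le> int (card X) - int (funspace.dim V)
           - (\<lceil>real (funspace.dim V) / real r\<rceil> - 1) * (int q - int r) + 1"
proof -
  let ?k = "funspace.dim V"
  have k: "1 \<le> ?k"
    using assms dim_pos_if_nonzero[OF finite_X] vanishes_outside by blast
  define t where "t = nat (\<lceil>real ?k / real r\<rceil> - 1)"
  have t: "int t = \<lceil>real ?k / real r\<rceil> - 1" "t * r < ?k"
    unfolding t_def using ceiling_divide_minus_one[OF k r_pos] by auto
  obtain c where c: "c \<in> V" "\<exists>x\<in>X. c x \<noteq> 0" "hweight X c + ?k + t * (q - r) \<le> card X + 1"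
    using exists_low_weight_codeword[OF t(2)] by blast
  have "min_dist X V \<le> hweight X c"
    by (rule min_dist_le_hweight[OF finite_X c(1,2)])
  then have "min_dist X V + ?k + t * (q - r) \<le> card X + 1"
    using c(3) by linarith
  moreover have "int (t * (q - r)) = int t * (int q - int r)"
    using r_le_q by (simp add: of_nat_diff)
  ultimately have "int (min_dist X V) + int ?k + int t * (int q - int r) \<le> int (card X) + 1"
    by linarith
  then show ?thesis
    unfolding t(1) by linarith
qed

end

section \<open>Quasi affine cartesian codes are determined on lines\<close>

lemma finite_cart_points: "\<forall>i\<in>{1..n}. finite (K i) \<Longrightarrow> finite (cart_points n K)"
  unfolding cart_points_def by (rule finite_PiE) auto

lemma finite_supp_quasi_polys: "p \<in> quasi_polys n K \<delta> s d \<Longrightarrow> finite_supp p"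
  unfolding quasi_polys_def polys_le_def is_mpoly_def finite_supp_def by auto

lemma quasi_polys_of_support:
  assumes "p \<in> quasi_polys n K \<delta> s d" "q \<in> quasi_polys n K \<delta> s d"
    and "finite {e. p' e \<noteq> 0}" "{e. p' e \<noteq> 0} \<subseteq> {e. p e \<noteq> 0} \<union> {e. q e \<noteq> 0}"
  shows "p' \<in> quasi_polys n K \<delta> s d"
  using assms unfolding quasi_polys_def polys_le_def is_mpoly_def by blast

lemma quasi_polys_add:
  fixes p q :: "(nat \<Rightarrow> nat) \<Rightarrow> 'a::comm_ring_1"
  assumes "p \<in> quasi_polys n K \<delta> s d" "q \<in> quasi_polys n K \<delta> s d"
  shows "(\<lambda>e. p e + q e) \<in> quasi_polys n K \<delta> s d"
proof (rule quasi_polys_of_support[OF assms])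
  show supp: "{e. p e + q e \<noteq> 0} \<subseteq> {e. p e \<noteq> 0} \<union> {e. q e \<noteq> 0}"
    by auto
  show "finite {e. p e + q e \<noteq> 0}"
    using finite_supp_quasi_polys[OF assms(1)] finite_supp_quasi_polys[OF assms(2)]
    unfolding finite_supp_def by (intro finite_subset[OF supp]) simp
qed

lemma quasi_polys_scale:
  fixes p :: "(nat \<Rightarrow> nat) \<Rightarrow> 'a::comm_ring_1"
  assumes "p \<in> quasi_polys n K \<delta> s d"
  shows "(\<lambda>e. a * p e) \<in> quasi_polys n K \<delta> s d"
proof (rule quasi_polys_of_support[OF assms assms])
  show supp: "{e. a * p e \<noteq> 0} \<subseteq> {e. p e \<noteq> 0} \<union> {e. p e \<noteq> 0}"
    by auto
  show "finite {e. a * p e \<noteq> 0}"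
    using finite_supp_quasi_polys[OF assms] unfolding finite_supp_def
    by (intro finite_subset[OF supp]) simp
qed

lemma quasi_cart_code_subspace:
  "funspace.subspace (quasi_cart_code n (K :: nat \<Rightarrow> 'a::field set) \<delta> s d)"
proof (rule funspace.subspaceI)
  have "(\<lambda>e. 0) \<in> quasi_polys n K \<delta> s d"
    unfolding quasi_polys_def polys_le_def is_mpoly_def by auto
  moreover have "Psi n K (\<lambda>e. 0) = 0"
    unfolding Psi_def mpoly_eval_def by (auto simp: fun_eq_iff)
  ultimately show "0 \<in> quasi_cart_code n K \<delta> s d"
    unfolding quasi_cart_code_def by (metis image_eqI)
next
  fix c c'
  assume "c \<in> quasi_cart_code n K \<delta> s d" "c' \<in> quasi_cart_code n K \<delta> s d"
  then obtain p q where pq: "p \<in> quasi_polys n K \<delta> s d" "q \<in> quasi_polys n K \<delta> s d"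
    "c = Psi n K p" "c' = Psi n K q"
    unfolding quasi_cart_code_def by auto
  then have "c + c' = Psi n K (\<lambda>e. p e + q e)"
    unfolding Psi_def mpoly_eval_eq_eval_vars
    by (auto simp: fun_eq_iff eval_vars_add finite_supp_quasi_polys)
  then show "c + c' \<in> quasi_cart_code n K \<delta> s d"
    unfolding quasi_cart_code_def using quasi_polys_add[OF pq(1,2)] by blast
next
  fix a :: 'a and c
  assume "c \<in> quasi_cart_code n K \<delta> s d"
  then obtain p where p: "p \<in> quasi_polys n K \<delta> s d" "c = Psi n K p"
    unfolding quasi_cart_code_def by auto
  then have "(\<lambda>x. a * c x) = Psi n K (\<lambda>e. a * p e)"
    unfolding Psi_def mpoly_eval_eq_eval_vars
    by (auto simp: fun_eq_iff eval_vars_scale finite_supp_quasi_polys)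
  then show "(\<lambda>x. a * c x) \<in> quasi_cart_code n K \<delta> s d"
    unfolding quasi_cart_code_def using quasi_polys_scale[OF p(1)] by blast
qed

lemma quasi_cart_code_subset: "quasi_cart_code n K \<delta> s d \<subseteq> affine_cart_code n K d"
  unfolding quasi_cart_code_def affine_cart_code_def quasi_polys_def by auto

lemma quasi_codeword_outside: "c \<in> quasi_cart_code n K \<delta> s d \<Longrightarrow> x \<notin> cart_points n K \<Longrightarrow> c x = 0"
  unfolding quasi_cart_code_def Psi_def by auto

lemma quasi_cart_code_nonzero:
  fixes K :: "nat \<Rightarrow> 'a::field set"
  assumes "\<forall>i\<in>{1..n}. K i \<noteq> {}" "1 \<le> int (card (K s)) - int \<delta> + 1"
  obtains c x where "c \<in> quasi_cart_code n K \<delta> s d" "x \<in> cart_points n K" "c x \<noteq> 0"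
proof -
  define one :: "(nat \<Rightarrow> nat) \<Rightarrow> 'a" where "one e = (if e = (\<lambda>_. 0) then 1 else 0)" for e
  have supp: "{e. one e \<noteq> 0} = {\<lambda>_. 0}"
    unfolding one_def by auto
  have "one \<in> quasi_polys n K \<delta> s d"
    using assms(2) unfolding quasi_polys_def polys_le_def is_mpoly_def mono_deg_def
    by (auto simp: supp one_def split: if_splits)
  moreover have "cart_points n K \<noteq> {}"
    using assms(1) by (simp add: cart_points_def PiE_eq_empty_iff)
  then obtain x where x: "x \<in> cart_points n K"
    by blast
  moreover have "Psi n K one x = 1"
    using x unfolding Psi_def mpoly_eval_def supp by (simp add: one_def)
  ultimately show ?thesis
    using that[of "Psi n K one" x] unfolding quasi_cart_code_def by simp
qed

lemma quasi_codeword_determined_on_line: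
  fixes K :: "nat \<Rightarrow> 'a::field set"
  assumes c: "c \<in> quasi_cart_code n K \<delta> s d" and s: "s \<in> {1..n}"
    and y: "y \<in> PiE ({1..n} - {s}) K"
    and R: "R \<subseteq> K s" "finite R" "int (card R) = int (card (K s)) - int \<delta> + 1"
    and zero: "\<forall>t\<in>R. c (y(s := t)) = 0" and t: "t \<in> K s"
  shows "c (y(s := t)) = 0"
proof -
  obtain p where p: "p \<in> quasi_polys n K \<delta> s d" "c = Psi n K p"
    using c unfolding quasi_cart_code_def by auto
  let ?N = "card R" and ?J = "{1..n} - {s}"
  have deg: "\<forall>e. p e \<noteq> 0 \<longrightarrow> e s < ?N"
    using p(1) R(3) unfolding quasi_polys_def by auto
  have on_line: "y(s := u) \<in> cart_points n K" if "u \<in> K s" for u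
    using y s that unfolding cart_points_def by (auto simp: PiE_def Pi_def extensional_def)
  have eval: "c (y(s := u)) = (\<Sum>j<?N. eval_vars ?J (var_coeff p s j) y * u ^ j)"
    if "u \<in> K s" for u
    using eval_vars_update[OF _ s finite_supp_quasi_polys[OF p(1)] deg] on_line[OF that]
    by (simp add: p(2) Psi_def mpoly_eval_eq_eval_vars)
  have "\<forall>u\<in>R. (\<Sum>j<?N. eval_vars ?J (var_coeff p s j) y * u ^ j) = 0"
  proof
    fix u
    assume "u \<in> R"
    then show "(\<Sum>j<?N. eval_vars ?J (var_coeff p s j) y * u ^ j) = 0"
      using eval[of u] zero R(1) by auto
  qed
  then have "(\<Sum>j<?N. eval_vars ?J (var_coeff p s j) y * t ^ j) = 0"
    by (rule power_sum_eq_0_if_roots[OF R(2) order_refl])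
  then show ?thesis
    using eval[OF t] by simp
qed

lemma PiE_eq_UN_lines:
  assumes "s \<in> I"
  shows "PiE I K = (\<Union>y\<in>PiE (I - {s}) K. (\<lambda>t. y(s := t)) ` K s)"
proof -
  have "PiE I K = (\<lambda>(y, t). y(s := t)) ` (PiE (I - {s}) K \<times> K s)"
    using bij_betw_imp_surj_on[OF bij_betw_PiE_update[OF assms, of K]] by simp
  then show ?thesis
    unfolding Sigma_def by (simp add: image_UN image_image UNION_singleton_eq_range)
qed

lemma disjoint_family_on_lines:
  "disjoint_family_on (\<lambda>y. (\<lambda>t. y(s := t)) ` A) (PiE (I - {s}) K)"
proof -
  have "y = y'" if "y \<in> PiE (I - {s}) K" "y' \<in> PiE (I - {s}) K" "y(s := t) = y'(s := t')" for y y' t t'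
  proof -
    have "y = (y(s := t))(s := undefined)" "y' = (y'(s := t'))(s := undefined)"
      using that(1,2) by (auto simp: PiE_def extensional_def fun_eq_iff)
    then show ?thesis
      using that(3) by simp
  qed
  then show ?thesis
    unfolding disjoint_family_on_def by blast
qed

lemma inj_on_fun_upd: "inj_on (\<lambda>t. y(s := t)) A"
  by (rule inj_onI) (metis fun_upd_same)

lemma quasi_cart_code_line_code:
  fixes K :: "nat \<Rightarrow> 'a::field set"
  assumes K: "\<forall>i\<in>{1..n}. finite (K i) \<and> K i \<noteq> {}" and s: "s \<in> {1..n}"
    and R: "R \<subseteq> K s" "int (card R) = int (card (K s)) - int \<delta> + 1" "1 \<le> card R"
  shows "line_code (quasi_cart_code n K \<delta> s d) (cart_points n K) (PiE ({1..n} - {s}) K)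
    (\<lambda>y. (\<lambda>t. y(s := t)) ` K s) (\<lambda>y. (\<lambda>t. y(s := t)) ` R) (card (K s)) (card R)"
proof
  have finR: "finite R"
    using R(1) K s finite_subset by blast
  show "funspace.subspace (quasi_cart_code n K \<delta> s d)"
    by (rule quasi_cart_code_subspace)
  show "finite (PiE ({1..n} - {s}) K)"
    using K by (intro finite_PiE) auto
  show "disjoint_family_on (\<lambda>y. (\<lambda>t. y(s := t)) ` K s) (PiE ({1..n} - {s}) K)"
    by (rule disjoint_family_on_lines)
  show "cart_points n K = (\<Union>y\<in>PiE ({1..n} - {s}) K. (\<lambda>t. y(s := t)) ` K s)"
    unfolding cart_points_def by (rule PiE_eq_UN_lines[OF s])
  show "card ((\<lambda>t. y(s := t)) ` K s) = card (K s)" "card ((\<lambda>t. y(s := t)) ` R) = card R" for y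
    by (simp_all add: card_image[OF inj_on_fun_upd])
  show "(\<lambda>t. y(s := t)) ` R \<subseteq> (\<lambda>t. y(s := t)) ` K s" for y
    using R(1) by (rule image_mono)
  show "card R \<le> card (K s)"
    using card_mono[OF _ R(1)] K s by simp
  show "c x = 0" if "c \<in> quasi_cart_code n K \<delta> s d" "x \<notin> cart_points n K" for c x
    using that by (rule quasi_codeword_outside)
  show "c x = 0" if "c \<in> quasi_cart_code n K \<delta> s d" "y \<in> PiE ({1..n} - {s}) K"
    "\<forall>x\<in>(\<lambda>t. y(s := t)) ` R. c x = 0" "x \<in> (\<lambda>t. y(s := t)) ` K s" for c y x
    using that quasi_codeword_determined_on_line[OF that(1) s that(2) R(1) finR R(2)] by auto
qed (rule R(3))

theorem quasi_cart_code_singleton_bound: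
  fixes K :: "nat \<Rightarrow> 'a::field set"
  assumes K: "\<forall>i\<in>{1..n}. finite (K i) \<and> K i \<noteq> {}" and s: "s \<in> {1..n}" and "1 \<le> \<delta>"
    and r: "1 \<le> int (card (K s)) - int \<delta> + 1"
  shows "int (min_dist (cart_points n K) (quasi_cart_code n K \<delta> s d))
      \<le> int (\<Prod>i\<in>{1..n}. card (K i)) - int (code_dim (quasi_cart_code n K \<delta> s d))
         - (\<lceil>real (code_dim (quasi_cart_code n K \<delta> s d)) / real_of_int (int (card (K s)) - int \<delta> + 1)\<rceil> - 1)
           * (int \<delta> - 1) + 1"
proof -
  have "card (K s) + 1 - \<delta> \<le> card (K s)"
    using \<open>1 \<le> \<delta>\<close> by simp
  then obtain R where R: "R \<subseteq> K s" "card R = card (K s) + 1 - \<delta>"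
    by (rule obtain_subset_with_card_n)
  then have r': "int (card R) = int (card (K s)) - int \<delta> + 1"
    using r by simp
  then have "1 \<le> card R"
    using r by linarith
  then interpret line_code "quasi_cart_code n K \<delta> s d" "cart_points n K" "PiE ({1..n} - {s}) K"
    "\<lambda>y. (\<lambda>t. y(s := t)) ` K s" "\<lambda>y. (\<lambda>t. y(s := t)) ` R" "card (K s)" "card R"
    by (rule quasi_cart_code_line_code[OF K s R(1) r'])
  obtain c x where c: "c \<in> quasi_cart_code n K \<delta> s d" "c x \<noteq> 0"
    using quasi_cart_code_nonzero[of n K s \<delta>] K r by blast
  then have "\<exists>c\<in>quasi_cart_code n K \<delta> s d. c \<noteq> 0"
    by (intro bexI[of _ c]) (auto simp: zero_fun_def)
  moreover have "card (cart_points n K) = (\<Prod>i\<in>{1..n}. card (K i))"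
    unfolding cart_points_def by (simp add: card_PiE)
  moreover have "int (card (K s)) - int (card R) = int \<delta> - 1"
    using r' by simp
  ultimately show ?thesis
    using singleton_bound unfolding code_dim_def r'[symmetric] by simp
qed

section \<open>The minimum distance of affine cartesian codes\<close>

lemma affine_cart_code_witness:
  fixes K :: "nat \<Rightarrow> 'a::field set"
  assumes "\<forall>i\<in>{1..n}. finite (K i) \<and> K i \<noteq> {}" "A \<subseteq> {1..n}" "i1 \<in> {1..n}" "i1 \<notin> A"
    and "S \<subseteq> K i1" "card S < card (K i1)" "(\<Sum>i\<in>A. card (K i) - 1) + card S \<le> d"
  obtains c where "c \<in> affine_cart_code n K d" "\<exists>x\<in>cart_points n K. c x \<noteq> 0"
    "hweight (cart_points n K) c = (card (K i1) - card S) * (\<Prod>i\<in>{1..n} - A - {i1}. card (K i))"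
proof -
  obtain p where p: "is_mpoly n p"
    "\<forall>e. p e \<noteq> 0 \<longrightarrow> mono_deg n e \<le> (\<Sum>i\<in>A. card (K i) - 1) + card S
        \<and> (\<forall>i\<in>{1..n} - A - {i1}. e i = 0) \<and> e i1 \<le> card S"
    "hweight (cart_points n K) (Psi n K p) = (card (K i1) - card S) * (\<Prod>i\<in>{1..n} - A - {i1}. card (K i))"
    "\<exists>x\<in>cart_points n K. Psi n K p x \<noteq> 0"
    using exists_product_codeword[OF assms(1-6)] by blast
  have "p \<in> polys_le n d"
    unfolding polys_le_def using p(1,2) assms(7) by fastforce
  then show ?thesis
    using that p(3,4) unfolding affine_cart_code_def by blast
qed

lemma quasi_cart_code_witness:
  fixes K :: "nat \<Rightarrow> 'a::field set"
  assumes "\<forall>i\<in>{1..n}. finite (K i) \<and> K i \<noteq> {}" "A \<subseteq> {1..n}" "i1 \<in> {1..n}" "i1 \<notin> A"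
    and "S \<subseteq> K i1" "card S < card (K i1)" "(\<Sum>i\<in>A. card (K i) - 1) + card S \<le> d"
    and s: "s \<in> {1..n}" "s \<notin> A" "s = i1 \<longrightarrow> int (card S) < int (card (K s)) - int \<delta> + 1"
    and r: "1 \<le> int (card (K s)) - int \<delta> + 1"
  obtains c where "c \<in> quasi_cart_code n K \<delta> s d" "\<exists>x\<in>cart_points n K. c x \<noteq> 0"
    "hweight (cart_points n K) c = (card (K i1) - card S) * (\<Prod>i\<in>{1..n} - A - {i1}. card (K i))"
proof -
  obtain p where p: "is_mpoly n p"
    "\<forall>e. p e \<noteq> 0 \<longrightarrow> mono_deg n e \<le> (\<Sum>i\<in>A. card (K i) - 1) + card S
        \<and> (\<forall>i\<in>{1..n} - A - {i1}. e i = 0) \<and> e i1 \<le> card S"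
    "hweight (cart_points n K) (Psi n K p) = (card (K i1) - card S) * (\<Prod>i\<in>{1..n} - A - {i1}. card (K i))"
    "\<exists>x\<in>cart_points n K. Psi n K p x \<noteq> 0"
    using exists_product_codeword[OF assms(1-6)] by blast
  have "int (e s) < int (card (K s)) - int \<delta> + 1" if "p e \<noteq> 0" for e
  proof (cases "s = i1")
    case True
    then show ?thesis
      using p(2) that s(3) by fastforce
  next
    case False
    then show ?thesis
      using p(2) that s(1,2) r by fastforce
  qed
  then have "p \<in> quasi_polys n K \<delta> s d"
    unfolding quasi_polys_def polys_le_def using p(1,2) assms(7) by fastforce
  then show ?thesis
    using that p(3,4) unfolding quasi_cart_code_def by blast
qed

lemma affine_cart_code_weight_ge:
  fixes K :: "nat \<Rightarrow> 'a::field set"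
  assumes K: "\<forall>i\<in>{1..n}. finite (K i) \<and> K i \<noteq> {}"
    and mono: "\<forall>i j. 1 \<le> i \<and> i \<le> j \<and> j \<le> n \<longrightarrow> card (K i) \<le> card (K j)"
    and c: "c \<in> affine_cart_code n K d" "\<exists>x\<in>cart_points n K. c x \<noteq> 0"
  shows "cart_min_weight (map (\<lambda>i. card (K i)) [1..<Suc n]) d \<le> hweight (cart_points n K) c"
proof -
  obtain p where p: "p \<in> polys_le n d" "c = Psi n K p"
    using c(1) unfolding affine_cart_code_def by auto
  have "finite_supp p" "total_deg_le {1..n} p d"
    using p(1) unfolding polys_le_def is_mpoly_def finite_supp_def total_deg_le_def mono_deg_def
    by auto
  then have "reduced_rep {1..n} K d (eval_vars {1..n} p)"
    using K by (intro reduced_rep_eval_vars) auto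
  then obtain q where q: "finite_supp q" "total_deg_le {1..n} q d" "grid_reduced {1..n} K q"
    "\<forall>x\<in>PiE {1..n} K. eval_vars {1..n} q x = eval_vars {1..n} p x"
    unfolding reduced_rep_def by blast
  have nz: "{x\<in>cart_points n K. c x \<noteq> 0} = {x\<in>PiE {1..n} K. eval_vars {1..n} q x \<noteq> 0}"
    unfolding p(2) Psi_def cart_points_def mpoly_eval_eq_eval_vars using q(4) by auto
  have "cart_min_weight (map (\<lambda>i. card (K i)) (sorted_list_of_set {1..n})) d
      \<le> card {x\<in>PiE {1..n} K. eval_vars {1..n} q x \<noteq> 0}"
  proof (rule cart_min_weight_le_card_nonzero)
    show "\<exists>x\<in>PiE {1..n} K. eval_vars {1..n} q x \<noteq> 0"
      using c(2) nz by blast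
  qed (use K mono q in auto)
  then show ?thesis
    unfolding hweight_def nz by (simp add: atLeastLessThanSuc_atLeastAtMost[symmetric])
qed

theorem affine_cart_code_min_dist:
  fixes K :: "nat \<Rightarrow> 'a::field set"
  assumes K: "\<forall>i\<in>{1..n}. finite (K i) \<and> K i \<noteq> {}"
    and mono: "\<forall>i j. 1 \<le> i \<and> i \<le> j \<and> j \<le> n \<longrightarrow> card (K i) \<le> card (K j)"
    and k: "k < n" and l: "0 < l" "l \<le> card (K (k + 1)) - 1"
    and d: "d = (\<Sum>i\<in>{1..k}. card (K i) - 1) + l"
  shows "min_dist (cart_points n K) (affine_cart_code n K d)
           = (card (K (k + 1)) - l) * (\<Prod>i\<in>{k+2..n}. card (K i))"
proof -
  let ?B = "(card (K (k + 1)) - l) * (\<Prod>i\<in>{k+2..n}. card (K i))"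
  have "l \<le> card (K (k + 1))"
    using l by simp
  then obtain S where S: "S \<subseteq> K (k + 1)" "card S = l"
    using obtain_subset_with_card_n by blast
  have "{1..k} \<subseteq> {1..n}" "k + 1 \<in> {1..n}" "k + 1 \<notin> {1..k}"
    using k by auto
  moreover have "card S < card (K (k + 1))" "(\<Sum>i\<in>{1..k}. card (K i) - 1) + card S \<le> d"
    using S l d by simp_all
  ultimately obtain c where c: "c \<in> affine_cart_code n K d" "\<exists>x\<in>cart_points n K. c x \<noteq> 0"
    "hweight (cart_points n K) c = (card (K (k + 1)) - card S) * (\<Prod>i\<in>{1..n} - {1..k} - {k + 1}. card (K i))"
    using affine_cart_code_witness[OF K _ _ _ S(1)] by blast
  have "{1..n} - {1..k} - {k + 1} = {k+2..n}"
    by auto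
  then have hw: "hweight (cart_points n K) c = ?B"
    using c(3) S(2) by simp
  have bound: "cart_min_weight (map (\<lambda>i. card (K i)) [1..<Suc n]) d = ?B"
    unfolding d using K k l by (intro cart_min_weight_upt) (auto simp: Suc_le_eq card_gt_0_iff)
  have "finite (cart_points n K)"
    using K by (simp add: finite_cart_points)
  then show ?thesis
  proof (rule min_dist_eqI[OF _ c(1,2) hw])
    fix c'
    assume "c' \<in> affine_cart_code n K d" "\<exists>x\<in>cart_points n K. c' x \<noteq> 0"
    then show "?B \<le> hweight (cart_points n K) c'"
      using affine_cart_code_weight_ge[OF K mono] bound by metis
  qed
qed

lemma min_dist_affine_le_quasi:
  fixes K :: "nat \<Rightarrow> 'a::field set"
  assumes K: "\<forall>i\<in>{1..n}. finite (K i) \<and> K i \<noteq> {}" and r: "1 \<le> int (card (K s)) - int \<delta> + 1"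
  shows "min_dist (cart_points n K) (affine_cart_code n K d)
           \<le> min_dist (cart_points n K) (quasi_cart_code n K \<delta> s d)"
proof -
  obtain c x where "c \<in> quasi_cart_code n K \<delta> s d" "x \<in> cart_points n K" "c x \<noteq> 0"
    using quasi_cart_code_nonzero[of n K s \<delta>] K r by blast
  moreover have "finite (cart_points n K)"
    using K by (simp add: finite_cart_points)
  ultimately show ?thesis
    by (intro min_dist_antimono[OF _ quasi_cart_code_subset]) auto
qed

section \<open>Quasi affine cartesian codes attaining the minimum distance\<close>

locale quasi_cart_setting =
  fixes n :: nat and K :: "nat \<Rightarrow> 'a::field set" and \<delta> s k l d :: nat
  assumes K: "\<forall>i\<in>{1..n}. finite (K i) \<and> K i \<noteq> {}"
    and mono: "\<forall>i j. 1 \<le> i \<and> i \<le> j \<and> j \<le> n \<longrightarrow> card (K i) \<le> card (K j)"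
    and s: "s \<in> {1..n}" and r: "1 \<le> int (card (K s)) - int \<delta> + 1"
    and k: "k < n" and l: "0 < l" "l \<le> card (K (k + 1)) - 1"
    and d: "d = (\<Sum>i\<in>{1..k}. card (K i) - 1) + l"
begin

lemma card_pos: "i \<in> {1..n} \<Longrightarrow> 0 < card (K i)"
  using K by (simp add: card_gt_0_iff)

lemma obtain_subset_card_l:
  assumes "card (K (k + 1)) \<le> card (K i)"
  obtains S where "S \<subseteq> K i" "card S = l" "card S < card (K i)"
proof -
  have "l < card (K i)"
    using l assms card_pos[of "k + 1"] k by simp
  then show ?thesis
    using that obtain_subset_with_card_n[of l "K i"] by auto
qed

lemma witness_beyond:
  assumes "k + 2 \<le> s"
  obtains c where "c \<in> quasi_cart_code n K \<delta> s d" "\<exists>x\<in>cart_points n K. c x \<noteq> 0"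
    "hweight (cart_points n K) c = (card (K (k + 1)) - l) * (\<Prod>i\<in>{k+2..n}. card (K i))"
proof -
  obtain S where S: "S \<subseteq> K (k + 1)" "card S = l" "card S < card (K (k + 1))"
    using obtain_subset_card_l by blast
  have "{1..n} - {1..k} - {k + 1} = {k+2..n}"
    by auto
  then show ?thesis
    using quasi_cart_code_witness[OF K _ _ _ S(1,3) _ s _ _ r, of "{1..k}"] that S(2) k d assms
    by auto
qed

text \<open>If \<open>|K\<^sub>s| = |K\<^sub>k\<^sub>+\<^sub>2|\<close>, exchanging the coordinates \<open>s\<close> and \<open>k + 2\<close> in the standard witness gives
  one that does not involve \<open>X\<^sub>s\<close> at all.\<close>

lemma witness_swap:
  assumes "s \<le> k + 1" "k + 2 \<le> n" "card (K (k + 2)) \<le> card (K s)"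
  obtains c where "c \<in> quasi_cart_code n K \<delta> s d" "\<exists>x\<in>cart_points n K. c x \<noteq> 0"
    "hweight (cart_points n K) c = (card (K (k + 1)) - l) * (\<Prod>i\<in>{k+2..n}. card (K i))"
proof -
  define \<sigma> where "\<sigma> i = (if i = s then k + 2 else if i = k + 2 then s else i)" for i
  have inj: "inj \<sigma>"
    by (rule inj_onI) (auto simp: \<sigma>_def split: if_splits)
  have "card (K s) \<le> card (K (k + 2))"
    using mono s assms by simp
  then have card_\<sigma>: "card (K (\<sigma> i)) = card (K i)" for i
    using assms(3) by (simp add: \<sigma>_def)
  have \<sigma>_range: "\<sigma> ` {1..n} = {1..n}"
    using s assms(2) by (auto simp: \<sigma>_def image_iff)
  obtain S where S: "S \<subseteq> K (\<sigma> (k + 1))" "card S = l" "card S < card (K (\<sigma> (k + 1)))"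
    using obtain_subset_card_l[of "\<sigma> (k + 1)"] card_\<sigma> by auto
  have "\<sigma> ` {1..k} \<subseteq> \<sigma> ` {1..n}" "\<sigma> (k + 1) \<in> \<sigma> ` {1..n}"
    using k by auto
  then have A: "\<sigma> ` {1..k} \<subseteq> {1..n}" "\<sigma> (k + 1) \<in> {1..n}"
    unfolding \<sigma>_range .
  have "\<sigma> (k + 2) = s"
    by (simp add: \<sigma>_def)
  then have A': "\<sigma> (k + 1) \<notin> \<sigma> ` {1..k}" "s \<notin> \<sigma> ` {1..k}" "s \<noteq> \<sigma> (k + 1)"
    using inj by (auto simp: inj_image_mem_iff inj_eq)
  have "(\<Sum>i\<in>\<sigma> ` {1..k}. card (K i) - 1) = (\<Sum>i\<in>{1..k}. card (K i) - 1)"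
    by (simp add: sum.reindex[OF inj_on_subset[OF inj subset_UNIV]] card_\<sigma>)
  then have deg: "(\<Sum>i\<in>\<sigma> ` {1..k}. card (K i) - 1) + card S \<le> d"
    using S(2) d by simp
  have "{1..n} - \<sigma> ` {1..k} - {\<sigma> (k + 1)} = \<sigma> ` ({1..n} - {1..k} - {k + 1})"
    using inj \<sigma>_range by (simp add: image_set_diff)
  also have "{1..n} - {1..k} - {k + 1} = {k+2..n}"
    by auto
  finally have prod: "(\<Prod>i\<in>{1..n} - \<sigma> ` {1..k} - {\<sigma> (k + 1)}. card (K i))
      = (\<Prod>i\<in>{k+2..n}. card (K i))"
    by (simp add: prod.reindex[OF inj_on_subset[OF inj subset_UNIV]] card_\<sigma>)
  obtain c where "c \<in> quasi_cart_code n K \<delta> s d" "\<exists>x\<in>cart_points n K. c x \<noteq> 0"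
    "hweight (cart_points n K) c = (card (K (\<sigma> (k + 1))) - card S)
      * (\<Prod>i\<in>{1..n} - \<sigma> ` {1..k} - {\<sigma> (k + 1)}. card (K i))"
    by (rule quasi_cart_code_witness[OF K A A'(1) S(1,3) deg s A'(2) _ r]) (use A'(3) in simp)
  then show ?thesis
    using that prod card_\<sigma>[of "k + 1"] S(2) by simp
qed

text \<open>Otherwise the witness uses the coordinate \<open>s\<close> itself, with \<open>|K\<^sub>s| - (|K\<^sub>k\<^sub>+\<^sub>1| - l) < r\<close>
  roots in \<open>K\<^sub>s\<close> and all of the coordinate \<open>k + 1\<close>.\<close>

lemma witness_pivot:
  assumes "s \<le> k + 1" "0 \<le> int (card (K s)) - (int (card (K (k + 1))) - int l)"
    "int (card (K s)) - (int (card (K (k + 1))) - int l) < int (card (K s)) - int \<delta> + 1"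
  obtains c where "c \<in> quasi_cart_code n K \<delta> s d" "\<exists>x\<in>cart_points n K. c x \<noteq> 0"
    "hweight (cart_points n K) c = (card (K (k + 1)) - l) * (\<Prod>i\<in>{k+2..n}. card (K i))"
proof -
  define u where "u = card (K s) + l - card (K (k + 1))"
  have "l < card (K (k + 1))"
    using l card_pos[of "k + 1"] k by simp
  then have u: "int u = int (card (K s)) - (int (card (K (k + 1))) - int l)" "u < card (K s)"
    using assms(2) by (auto simp: u_def)
  obtain S where S: "S \<subseteq> K s" "card S = u"
    using obtain_subset_with_card_n[of u "K s"] u(2) by auto
  have A: "{1..k + 1} - {s} \<subseteq> {1..n}" "s \<notin> {1..k + 1} - {s}"
    using k by auto
  have "s \<in> {1..k + 1}"
    using s assms(1) by simp
  then have "(\<Sum>i\<in>{1..k + 1}. card (K i) - 1) = (card (K s) - 1) + (\<Sum>i\<in>{1..k + 1} - {s}. card (K i) - 1)"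
    by (rule sum.remove[OF finite_atLeastAtMost])
  moreover have "(\<Sum>i\<in>{1..k + 1}. card (K i) - 1) = (\<Sum>i\<in>{1..k}. card (K i) - 1) + (card (K (k + 1)) - 1)"
    by simp
  moreover have "0 < card (K s)" "0 < card (K (k + 1))"
    using card_pos s k by auto
  ultimately have deg: "(\<Sum>i\<in>{1..k + 1} - {s}. card (K i) - 1) + card S \<le> d"
    using S(2) u(1) d by linarith
  obtain c where "c \<in> quasi_cart_code n K \<delta> s d" "\<exists>x\<in>cart_points n K. c x \<noteq> 0"
    "hweight (cart_points n K) c = (card (K s) - card S)
      * (\<Prod>i\<in>{1..n} - ({1..k + 1} - {s}) - {s}. card (K i))"
    by (rule quasi_cart_code_witness[OF K A(1) s A(2) S(1) _ deg s A(2) _ r])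
      (use S(2) u assms(3) in simp_all)
  moreover have "{1..n} - ({1..k + 1} - {s}) - {s} = {k+2..n}"
    using \<open>s \<in> {1..k + 1}\<close> by auto
  moreover have "card (K s) - card S = card (K (k + 1)) - l"
    using S(2) u(1) by linarith
  ultimately show ?thesis
    using that by simp
qed

lemma quasi_cart_code_min_dist_le:
  assumes "(k + 2 \<le> n \<and> card (K (k + 2)) \<le> card (K s))
      \<or> (card (K s) \<le> card (K (k + 1))
         \<and> 0 \<le> int (card (K s)) - (int (card (K (k + 1))) - int l)
         \<and> int (card (K s)) - (int (card (K (k + 1))) - int l) < int (card (K s)) - int \<delta> + 1)"
  shows "min_dist (cart_points n K) (quasi_cart_code n K \<delta> s d)
           \<le> (card (K (k + 1)) - l) * (\<Prod>i\<in>{k+2..n}. card (K i))"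
proof -
  obtain c where c: "c \<in> quasi_cart_code n K \<delta> s d" "\<exists>x\<in>cart_points n K. c x \<noteq> 0"
    "hweight (cart_points n K) c = (card (K (k + 1)) - l) * (\<Prod>i\<in>{k+2..n}. card (K i))"
  proof (cases "k + 2 \<le> s")
    case True
    then show ?thesis
      using that by (rule witness_beyond)
  next
    case False
    then have "s \<le> k + 1"
      by simp
    from assms show ?thesis
    proof
      assume "k + 2 \<le> n \<and> card (K (k + 2)) \<le> card (K s)"
      then show ?thesis
        using that witness_swap[OF \<open>s \<le> k + 1\<close>] by blast
    next
      assume "card (K s) \<le> card (K (k + 1))
         \<and> 0 \<le> int (card (K s)) - (int (card (K (k + 1))) - int l)
         \<and> int (card (K s)) - (int (card (K (k + 1))) - int l) < int (card (K s)) - int \<delta> + 1"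
      then show ?thesis
        using that witness_pivot[OF \<open>s \<le> k + 1\<close>] by blast
    qed
  qed
  moreover have "finite (cart_points n K)"
    using K by (simp add: finite_cart_points)
  ultimately show ?thesis
    using min_dist_le_hweight[of "cart_points n K" c] by simp
qed

end

theorem mainTheorem5:
  fixes K :: "nat \<Rightarrow> 'a::{field,finite} set"
    and n k l \<delta> s d :: nat
  assumes "n \<ge> 2"
    and "2 \<le> card (K 1)"
    and "\<forall>i j. 1 \<le> i \<and> i \<le> j \<and> j \<le> n \<longrightarrow> card (K i) \<le> card (K j)"
    and "\<delta> \<ge> 2"
    and "s \<in> {1..n}"
    and "int (card (K s)) - int \<delta> + 1 \<ge> 1"
    and "k < n" and "0 < l" and "l \<le> card (K (k+1)) - 1"
    and "d = (\<Sum>i\<in>{1..k}. (card (K i) - 1)) + l"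
  shows
    "let X = cart_points n K;
         m = (\<Prod>i\<in>{1..n}. card (K i));
         r = int (card (K s)) - int \<delta> + 1;
         C = affine_cart_code n K d;
         D = quasi_cart_code n K \<delta> s d;
         \<kappa> = code_dim D;
         B = (card (K (k+1)) - l) * (\<Prod>i\<in>{k+2..n}. card (K i))
     in B = min_dist X C \<and> min_dist X C \<le> min_dist X D
        \<and> int (min_dist X D) \<le> int m - int \<kappa>
             - (ceiling (real \<kappa> / real_of_int r) - 1) * (int \<delta> - 1) + 1
        \<and> (((k + 2 \<le> n \<and> card (K (k+2)) \<le> card (K s))
            \<or> (card (K s) \<le> card (K (k+1))
               \<and> 0 \<le> int (card (K s)) - (int (card (K (k+1))) - int l)
               \<and> int (card (K s)) - (int (card (K (k+1))) - int l) < r))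
           \<longrightarrow> min_dist X D = min_dist X C \<and> min_dist X C = B)"
proof -
  have "2 \<le> card (K i)" if "i \<in> {1..n}" for i
    using assms(2) assms(3)[rule_format, of 1 i] that by simp
  then have K: "\<forall>i\<in>{1..n}. finite (K i) \<and> K i \<noteq> {}"
    by (metis card.empty card.infinite not_numeral_le_zero)
  interpret quasi_cart_setting n K \<delta> s k l d
    using K assms(3,5-10) by unfold_locales
  have "min_dist (cart_points n K) (affine_cart_code n K d)
      = (card (K (k+1)) - l) * (\<Prod>i\<in>{k+2..n}. card (K i))"
    by (rule affine_cart_code_min_dist[OF K assms(3,7-10)])
  moreover have "min_dist (cart_points n K) (affine_cart_code n K d)
      \<le> min_dist (cart_points n K) (quasi_cart_code n K \<delta> s d)"
    by (rule min_dist_affine_le_quasi[OF K assms(6)])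
  moreover note quasi_cart_code_singleton_bound[OF K assms(5) _ assms(6)] assms(4)
  ultimately show ?thesis
    unfolding Let_def using quasi_cart_code_min_dist_le by fastforce
qed

end
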